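(* Consider two $M^{X}/G/1$ queues operating under the LCFS-p-resume discipline, with the same Poisson batch-arrival rate $\lambda$ and the same batch-size distribution (mean $\mu$), and with generic i.i.d. service times $S$ and $S'$ respectively, both stable ($\lambda\mu ES<1$, $\lambda\mu ES'<1$). Let $M$ and $M'$ be the maximum numbers of customers in the system during a busy period in the respective queues. If $S'\leq_{LT}S$, then $M'\leq_{st}M$. In particular, if $S'\geq_{cx}S$, then $M'\leq_{st}M$.
   Context: Under LCFS-p-resume, the customer who has been in the system the least amount of time is always served, newly arriving customers preempt the customer in service, customers within a batch are labeled arbitrarily (treated as arriving sequentially), service is non-idling, and preempted customers resume service where they left off. Orders: $X\geq_{st}Y$ iff $P(X>t)\geq P(Y>t)$ for all $t$; $X\geq_{cx}Y$ iff $E\phi(X)\geq E\phi(Y)$ for all convex $\phi$ for which the expectations exist; $X\geq_{LT}Y$ iff $E[e^{-\theta X}]\leq E[e^{-\theta Y}]$ for all $\theta>0$ for which the expectations exist. *)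

theory Defs
  imports "HOL-Probability.Probability"
begin

definition st_ge :: "'a::linorder measure \<Rightarrow> 'a measure \<Rightarrow> bool" where
  "st_ge X Y \<longleftrightarrow> (\<forall>t. measure Y {x\<in>space Y. x > t} \<le> measure X {x\<in>space X. x > t})"

definition cx_ge :: "real measure \<Rightarrow> real measure \<Rightarrow> bool" where
  "cx_ge X Y \<longleftrightarrow> (\<forall>\<phi>. convex_on UNIV \<phi> \<longrightarrow> integrable X \<phi> \<longrightarrow> integrable Y \<phi> \<longrightarrow>
      (\<integral>y. \<phi> y \<partial>Y) \<le> (\<integral>x. \<phi> x \<partial>X))"

definition lt_ge :: "real measure \<Rightarrow> real measure \<Rightarrow> bool" where
  "lt_ge X Y \<longleftrightarrow> (\<forall>\<theta>>0. integrable X (\<lambda>x. exp (-\<theta>*x)) \<longrightarrow> integrable Y (\<lambda>y. exp (-\<theta>*y)) \<longrightarrow>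
      (\<integral>x. exp (-\<theta>*x) \<partial>X) \<le> (\<integral>y. exp (-\<theta>*y) \<partial>Y))"

text \<open>The system content is a stack of remaining service requirements (head = customer in
  service). Serving for d time units: the head is worked on; when it completes, the next one
  resumes where it left off (preemptive resume).\<close>
fun serve :: "real \<Rightarrow> real list \<Rightarrow> real list" where
  "serve d [] = []"
| "serve d (x # xs) = (if d < x then (x - d) # xs else serve (d - x) xs)"

text \<open>Inputs: A k = time between the k-th and (k+1)-st batch arrival (batch 0 opens the busy
  period at time 0); N k = size of batch k; V k j = service time of the j-th customer of batch k.
  Customers of a batch arrive sequentially, each preempting its predecessor, so the last one of
  the batch is on top of the stack.\<close>
definition batch :: "(nat \<Rightarrow> nat) \<Rightarrow> (nat \<Rightarrow> nat \<Rightarrow> real) \<Rightarrow> nat \<Rightarrow> real list" where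
  "batch N V k = rev (map (V k) [0..<N k])"

fun stack :: "(nat \<Rightarrow> real) \<Rightarrow> (nat \<Rightarrow> nat) \<Rightarrow> (nat \<Rightarrow> nat \<Rightarrow> real) \<Rightarrow> nat \<Rightarrow> real list" where
  "stack A N V 0 = batch N V 0"
| "stack A N V (Suc k) = batch N V (Suc k) @ serve (A k) (stack A N V k)"

definition in_bp :: "(nat \<Rightarrow> real) \<Rightarrow> (nat \<Rightarrow> nat) \<Rightarrow> (nat \<Rightarrow> nat \<Rightarrow> real) \<Rightarrow> nat \<Rightarrow> bool" where
  "in_bp A N V k \<longleftrightarrow> (\<forall>j<k. serve (A j) (stack A N V j) \<noteq> [])"

text \<open>Maximum number of customers in the system during the busy period (the maximum is
  attained at arrival instants).\<close>
definition max_bp :: "(nat \<Rightarrow> real) \<Rightarrow> (nat \<Rightarrow> nat) \<Rightarrow> (nat \<Rightarrow> nat \<Rightarrow> real) \<Rightarrow> enat" where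
  "max_bp A N V = (SUP k\<in>{k. in_bp A N V k}. enat (length (stack A N V k)))"

definition exp_dist :: "real \<Rightarrow> real measure" where
  "exp_dist l = density lborel (exponential_density l)"

definition input_space :: "real \<Rightarrow> nat pmf \<Rightarrow> real measure
    \<Rightarrow> ((nat \<Rightarrow> real) \<times> (nat \<Rightarrow> nat) \<times> (nat \<Rightarrow> nat \<Rightarrow> real)) measure" where
  "input_space lam Bd Sd =
     PiM UNIV (\<lambda>_::nat. exp_dist lam) \<Otimes>\<^sub>M
       (PiM UNIV (\<lambda>_::nat. measure_pmf Bd) \<Otimes>\<^sub>M PiM UNIV (\<lambda>_::nat. PiM UNIV (\<lambda>_::nat. Sd)))"

definition M_dist :: "real \<Rightarrow> nat pmf \<Rightarrow> real measure \<Rightarrow> enat measure" where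
  "M_dist lam Bd Sd = distr (input_space lam Bd Sd) (count_space UNIV)
      (\<lambda>(A, N, V). max_bp A N V)"

end

theory Submission
  imports Defs
begin

(* Record the state just before a batch arrival as the stack xs of remaining service times,
   the customer in service on top. Let q_m(d) be the probability that a batch arriving to d
   customers drives the number in system up to m before it has been served, and
   phi(x) = E exp(-lam x S) the probability that a service time sees no arrival of a Poisson
   stream of rate lam x. A customer at height p is served only while nobody is above it, and
   during its service the batches arriving to p customers overflow independently with
   probability q_m(p); by Poisson thinning the probability of never reaching m from xs is
     G(xs) = (1 - q_m(|xs|)) exp(-lam sum_p q_m(p) x_p),
   where q_m solves 1 - q_m(d) = E[d + N < m; prod_{j=1..N} phi(q_m(d + j))].
   G is harmonic for the chain observed at arrival epochs, which gives the lower bound; the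
   upper bound holds because staying busy below m for ever has probability zero, as m
   consecutive steps that grow the stack have probability bounded away from zero. Hence
   P(M < m) = 1 - q_m(0). A smaller Laplace transform makes every q_m(d) larger, by
   induction on the recursion, so M is stochastically larger. *)

section \<open>Product measures\<close>

lemma nn_integral_pair_measure_swap_middle:
  assumes s1: "sigma_finite_measure M1" and s2: "sigma_finite_measure M2"
    and s3: "sigma_finite_measure M3" and s4: "sigma_finite_measure M4"
    and f[measurable]: "f \<in> borel_measurable ((M1 \<Otimes>\<^sub>M M2) \<Otimes>\<^sub>M (M3 \<Otimes>\<^sub>M M4))"
  shows "(\<integral>\<^sup>+z. f z \<partial>((M1 \<Otimes>\<^sub>M M2) \<Otimes>\<^sub>M (M3 \<Otimes>\<^sub>M M4))) =
    (\<integral>\<^sup>+z. f ((fst (fst z), fst (snd z)), (snd (fst z), snd (snd z))) \<partial>((M1 \<Otimes>\<^sub>M M3) \<Otimes>\<^sub>M (M2 \<Otimes>\<^sub>M M4)))"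
proof -
  interpret p23: pair_sigma_finite M2 M3 using s2 s3 by (simp add: pair_sigma_finite_def)
  have s24: "sigma_finite_measure (M2 \<Otimes>\<^sub>M M4)" and s34: "sigma_finite_measure (M3 \<Otimes>\<^sub>M M4)"
    by (intro sigma_finite_pair_measure s2 s3 s4)+
  interpret M34: sigma_finite_measure "M3 \<Otimes>\<^sub>M M4" by (rule s34)
  interpret M24: sigma_finite_measure "M2 \<Otimes>\<^sub>M M4" by (rule s24)
  interpret M4: sigma_finite_measure M4 by (rule s4)
  have "(\<integral>\<^sup>+z. f z \<partial>((M1 \<Otimes>\<^sub>M M2) \<Otimes>\<^sub>M (M3 \<Otimes>\<^sub>M M4))) =
     (\<integral>\<^sup>+x12. \<integral>\<^sup>+x34. f (x12, x34) \<partial>(M3 \<Otimes>\<^sub>M M4) \<partial>(M1 \<Otimes>\<^sub>M M2))"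
    by (rule M34.nn_integral_fst[symmetric]) simp
  also have "\<dots> = (\<integral>\<^sup>+x1. \<integral>\<^sup>+x2. \<integral>\<^sup>+x34. f ((x1, x2), x34) \<partial>(M3 \<Otimes>\<^sub>M M4) \<partial>M2 \<partial>M1)"
    by (rule sigma_finite_measure.nn_integral_fst[OF s2, symmetric]) measurable
  also have "\<dots> = (\<integral>\<^sup>+x1. \<integral>\<^sup>+x2. \<integral>\<^sup>+x3. \<integral>\<^sup>+x4. f ((x1, x2), (x3, x4)) \<partial>M4 \<partial>M3 \<partial>M2 \<partial>M1)"
    by (intro nn_integral_cong sigma_finite_measure.nn_integral_fst[OF s4, symmetric])
      (auto simp: space_pair_measure)
  also have "\<dots> = (\<integral>\<^sup>+x1. \<integral>\<^sup>+x3. \<integral>\<^sup>+x2. \<integral>\<^sup>+x4. f ((x1, x2), (x3, x4)) \<partial>M4 \<partial>M2 \<partial>M3 \<partial>M1)"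
    by (intro nn_integral_cong p23.Fubini'[symmetric]) measurable
  also have "\<dots> = (\<integral>\<^sup>+x1. \<integral>\<^sup>+x3. \<integral>\<^sup>+x24. f ((x1, fst x24), (x3, snd x24)) \<partial>(M2 \<Otimes>\<^sub>M M4) \<partial>M3 \<partial>M1)"
  proof (intro nn_integral_cong)
    fix x1 x3 assume "x1 \<in> space M1" "x3 \<in> space M3"
    then have "(\<lambda>x24. f ((x1, fst x24), (x3, snd x24))) \<in> borel_measurable (M2 \<Otimes>\<^sub>M M4)"
      by measurable
    from M4.nn_integral_fst[OF this] show "(\<integral>\<^sup>+x2. \<integral>\<^sup>+x4. f ((x1, x2), (x3, x4)) \<partial>M4 \<partial>M2) =
        (\<integral>\<^sup>+x24. f ((x1, fst x24), (x3, snd x24)) \<partial>(M2 \<Otimes>\<^sub>M M4))"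
      by simp
  qed
  also have "\<dots> = (\<integral>\<^sup>+x13. \<integral>\<^sup>+x24. f ((fst x13, fst x24), (snd x13, snd x24)) \<partial>(M2 \<Otimes>\<^sub>M M4) \<partial>(M1 \<Otimes>\<^sub>M M3))"
  proof -
    have "(\<lambda>x13. \<integral>\<^sup>+x24. f ((fst x13, fst x24), (snd x13, snd x24)) \<partial>(M2 \<Otimes>\<^sub>M M4))
        \<in> borel_measurable (M1 \<Otimes>\<^sub>M M3)"
      by measurable
    from sigma_finite_measure.nn_integral_fst[OF s3 this] show ?thesis by simp
  qed
  also have "\<dots> = (\<integral>\<^sup>+z. f ((fst (fst z), fst (snd z)), (snd (fst z), snd (snd z))) \<partial>((M1 \<Otimes>\<^sub>M M3) \<Otimes>\<^sub>M (M2 \<Otimes>\<^sub>M M4)))"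
  proof -
    have "(\<lambda>z. f ((fst (fst z), fst (snd z)), (snd (fst z), snd (snd z))))
        \<in> borel_measurable ((M1 \<Otimes>\<^sub>M M3) \<Otimes>\<^sub>M (M2 \<Otimes>\<^sub>M M4))"
      by measurable
    from M24.nn_integral_fst[OF this] show ?thesis by simp
  qed
  finally show ?thesis .
qed

lemma pair_measure_swap_middle:
  assumes "sigma_finite_measure M1" "sigma_finite_measure M2"
    "sigma_finite_measure M3" "sigma_finite_measure M4"
  shows "distr ((M1 \<Otimes>\<^sub>M M3) \<Otimes>\<^sub>M (M2 \<Otimes>\<^sub>M M4)) ((M1 \<Otimes>\<^sub>M M2) \<Otimes>\<^sub>M (M3 \<Otimes>\<^sub>M M4))
      (\<lambda>z. ((fst (fst z), fst (snd z)), (snd (fst z), snd (snd z)))) = (M1 \<Otimes>\<^sub>M M2) \<Otimes>\<^sub>M (M3 \<Otimes>\<^sub>M M4)"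
proof (rule measure_eqI)
  fix A assume A: "A \<in> sets (distr ((M1 \<Otimes>\<^sub>M M3) \<Otimes>\<^sub>M (M2 \<Otimes>\<^sub>M M4)) ((M1 \<Otimes>\<^sub>M M2) \<Otimes>\<^sub>M (M3 \<Otimes>\<^sub>M M4))
      (\<lambda>z. ((fst (fst z), fst (snd z)), (snd (fst z), snd (snd z)))))"
  then have [measurable]: "A \<in> sets ((M1 \<Otimes>\<^sub>M M2) \<Otimes>\<^sub>M (M3 \<Otimes>\<^sub>M M4))" by simp
  show "emeasure (distr ((M1 \<Otimes>\<^sub>M M3) \<Otimes>\<^sub>M (M2 \<Otimes>\<^sub>M M4)) ((M1 \<Otimes>\<^sub>M M2) \<Otimes>\<^sub>M (M3 \<Otimes>\<^sub>M M4))
      (\<lambda>z. ((fst (fst z), fst (snd z)), (snd (fst z), snd (snd z))))) A = emeasure ((M1 \<Otimes>\<^sub>M M2) \<Otimes>\<^sub>M (M3 \<Otimes>\<^sub>M M4)) A"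
    by (simp add: nn_integral_distr nn_integral_pair_measure_swap_middle[OF assms, of "indicator A"]
        flip: nn_integral_indicator)
qed simp

lemma pair_measure_distr_cons:
  assumes s: "sigma_finite_measure M0" "sigma_finite_measure M" "sigma_finite_measure N0" "sigma_finite_measure N"
    and c[measurable]: "c \<in> M0 \<Otimes>\<^sub>M M \<rightarrow>\<^sub>M M" and d[measurable]: "d \<in> N0 \<Otimes>\<^sub>M N \<rightarrow>\<^sub>M N"
    and M: "distr (M0 \<Otimes>\<^sub>M M) M c = M" and N: "distr (N0 \<Otimes>\<^sub>M N) N d = N"
  shows "distr ((M0 \<Otimes>\<^sub>M N0) \<Otimes>\<^sub>M (M \<Otimes>\<^sub>M N)) (M \<Otimes>\<^sub>M N)
      (\<lambda>z. (c (fst (fst z), fst (snd z)), d (snd (fst z), snd (snd z)))) = M \<Otimes>\<^sub>M N"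
proof -
  have "M \<Otimes>\<^sub>M N = distr ((M0 \<Otimes>\<^sub>M M) \<Otimes>\<^sub>M (N0 \<Otimes>\<^sub>M N)) (M \<Otimes>\<^sub>M N) (\<lambda>(u, v). (c u, d v))"
    using pair_measure_distr[OF c d] s(4) by (simp add: M N)
  also have "(M0 \<Otimes>\<^sub>M M) \<Otimes>\<^sub>M (N0 \<Otimes>\<^sub>M N) = distr ((M0 \<Otimes>\<^sub>M N0) \<Otimes>\<^sub>M (M \<Otimes>\<^sub>M N)) ((M0 \<Otimes>\<^sub>M M) \<Otimes>\<^sub>M (N0 \<Otimes>\<^sub>M N))
      (\<lambda>z. ((fst (fst z), fst (snd z)), (snd (fst z), snd (snd z))))"
    by (rule pair_measure_swap_middle[symmetric]) (use s in simp_all)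
  finally show ?thesis
    by (subst (asm) distr_distr) (simp_all add: comp_def case_prod_beta)
qed

lemma distr_PiM_nat_cons:
  assumes "prob_space M"
  shows "distr (M \<Otimes>\<^sub>M PiM UNIV (\<lambda>_::nat. M)) (PiM UNIV (\<lambda>_::nat. M)) (\<lambda>(s, \<omega>). case_nat s \<omega>)
    = PiM UNIV (\<lambda>_::nat. M)"
proof -
  interpret sequence_space M
    by (simp add: sequence_space_def product_prob_space_def product_sigma_finite_def
        prob_space_imp_sigma_finite assms product_prob_space_axioms_def)
  show ?thesis by (rule PiM_iter)
qed

lemma nn_integral_PiM_nat_cons:
  assumes M: "prob_space M" and f[measurable]: "f \<in> borel_measurable (PiM UNIV (\<lambda>_::nat. M))"
  shows "(\<integral>\<^sup>+X. f X \<partial>PiM UNIV (\<lambda>_::nat. M)) = (\<integral>\<^sup>+x. \<integral>\<^sup>+X. f (case_nat x X) \<partial>PiM UNIV (\<lambda>_::nat. M) \<partial>M)"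
proof -
  interpret sequence_space M
    by (simp add: sequence_space_def product_prob_space_def product_sigma_finite_def
        prob_space_imp_sigma_finite M product_prob_space_axioms_def)
  have "(\<integral>\<^sup>+X. f X \<partial>S) = (\<integral>\<^sup>+X. f ((\<lambda>(s, \<omega>). case_nat s \<omega>) X) \<partial>(M \<Otimes>\<^sub>M S))"
    by (subst PiM_iter[symmetric], rule nn_integral_distr) auto
  also have "\<dots> = (\<integral>\<^sup>+x. \<integral>\<^sup>+X. f (case_nat x X) \<partial>S \<partial>M)"
    by (subst P.nn_integral_fst[symmetric]) auto
  finally show ?thesis .
qed

lemma nn_integral_PiM_prod_lessThan:
  assumes M: "prob_space M" and g: "\<And>j. g j \<in> borel_measurable M"
  shows "(\<integral>\<^sup>+v. (\<Prod>j<n. g j (v j)) \<partial>PiM UNIV (\<lambda>_::nat. M)) = (\<Prod>j<n. \<integral>\<^sup>+x. g j x \<partial>M)"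
  using g
proof (induction n arbitrary: g)
  case 0
  interpret prob_space "PiM UNIV (\<lambda>_::nat. M)" by (simp add: M prob_space_PiM)
  show ?case by (simp add: emeasure_space_1)
next
  case (Suc n)
  note [measurable] = Suc.prems
  have "(\<integral>\<^sup>+v. (\<Prod>j<Suc n. g j (v j)) \<partial>PiM UNIV (\<lambda>_::nat. M))
     = (\<integral>\<^sup>+x. g 0 x * \<integral>\<^sup>+X. (\<Prod>j<n. g (Suc j) (X j)) \<partial>PiM UNIV (\<lambda>_::nat. M) \<partial>M)"
    by (subst nn_integral_PiM_nat_cons[OF M], measurable)
       (intro nn_integral_cong, simp add: prod.lessThan_Suc_shift nn_integral_cmult del: prod.lessThan_Suc)
  also have "\<dots> = (\<integral>\<^sup>+x. g 0 x \<partial>M) * (\<Prod>j<n. \<integral>\<^sup>+x. g (Suc j) x \<partial>M)"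
    using Suc.IH[of "\<lambda>j. g (Suc j)"] by (simp add: nn_integral_multc)
  finally show ?case by (simp add: prod.lessThan_Suc_shift del: prod.lessThan_Suc)
qed

section \<open>Measurability of list-valued maps\<close>

text \<open>Lists carry no \<open>\<sigma>\<close>-algebra in the library, so a list-valued map counts as measurable
  when its length and all its entries are.\<close>
definition real_list_measurable :: "'a measure \<Rightarrow> ('a \<Rightarrow> real list) \<Rightarrow> bool" where
  "real_list_measurable M g \<longleftrightarrow> (\<lambda>x. length (g x)) \<in> M \<rightarrow>\<^sub>M count_space UNIV \<and>
     (\<forall>i. (\<lambda>x. g x ! i) \<in> borel_measurable M)"

lemma real_list_measurable_length:
  "real_list_measurable M g \<Longrightarrow> (\<lambda>x. length (g x)) \<in> M \<rightarrow>\<^sub>M count_space UNIV"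
  and real_list_measurable_nth:
  "real_list_measurable M g \<Longrightarrow> (\<lambda>x. g x ! i) \<in> borel_measurable M"
  unfolding real_list_measurable_def by simp_all

lemma real_list_measurable_const: "real_list_measurable M (\<lambda>_. xs)"
  unfolding real_list_measurable_def by simp

lemma real_list_measurable_Cons:
  assumes "f \<in> borel_measurable M" "real_list_measurable M g"
  shows "real_list_measurable M (\<lambda>x. f x # g x)"
  using assms unfolding real_list_measurable_def
proof safe
  fix i show "(\<lambda>x. (f x # g x) ! i) \<in> borel_measurable M"
    using assms unfolding real_list_measurable_def by (cases i) auto
qed simp

lemma real_list_measurable_If:
  assumes "Measurable.pred M P" "real_list_measurable M g1" "real_list_measurable M g2"
  shows "real_list_measurable M (\<lambda>x. if P x then g1 x else g2 x)"
  using assms unfolding real_list_measurable_def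
  by (auto simp: if_distrib[of length] if_distrib[of "\<lambda>xs. xs ! _"] intro!: measurable_If)

lemma real_list_measurable_compose_countable:
  fixes h :: "'a \<Rightarrow> 'i::countable"
  assumes "\<And>L. real_list_measurable M (F L)" "h \<in> M \<rightarrow>\<^sub>M count_space UNIV"
  shows "real_list_measurable M (\<lambda>x. F (h x) x)"
  unfolding real_list_measurable_def
proof safe
  show "(\<lambda>x. length (F (h x) x)) \<in> M \<rightarrow>\<^sub>M count_space UNIV"
    by (rule measurable_compose_countable[where f="\<lambda>L x. length (F L x)"])
      (use assms in \<open>auto simp: real_list_measurable_def\<close>)
  fix i show "(\<lambda>x. F (h x) x ! i) \<in> borel_measurable M"
    by (rule measurable_compose_countable[where f="\<lambda>L x. F L x ! i"])
      (use assms in \<open>auto simp: real_list_measurable_def\<close>)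
qed

lemma real_list_measurable_map_upt:
  assumes "\<And>i. f i \<in> borel_measurable M"
  shows "real_list_measurable M (\<lambda>x. map (\<lambda>i. f i x) [0..<L])"
  using assms
proof (induction L arbitrary: f)
  case 0 then show ?case by (simp add: real_list_measurable_const)
next
  case (Suc L)
  have "real_list_measurable M (\<lambda>x. f 0 x # map (\<lambda>i. f (Suc i) x) [0..<L])"
    by (intro real_list_measurable_Cons Suc.prems Suc.IH)
  then show ?case by (simp add: map_upt_Suc del: upt_Suc)
qed

lemma real_list_measurable_cases_length:
  assumes g: "real_list_measurable M g"
    and F: "\<And>L. real_list_measurable M (\<lambda>x. F (map (\<lambda>i. g x ! i) [0..<L]) x)"
  shows "real_list_measurable M (\<lambda>x. F (g x) x)"
  using real_list_measurable_compose_countable[where F="\<lambda>L x. F (map (\<lambda>i. g x ! i) [0..<L]) x",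
      OF F real_list_measurable_length[OF g]]
  by (simp add: map_nth)

lemma real_list_measurable_append:
  assumes g1: "real_list_measurable M g1" and g2: "real_list_measurable M g2"
  shows "real_list_measurable M (\<lambda>x. g1 x @ g2 x)"
proof -
  let ?F = "\<lambda>LL x. map (\<lambda>i. if i < fst LL then g1 x ! i else g2 x ! (i - fst LL)) [0..<fst LL + snd LL]"
  have "real_list_measurable M (\<lambda>x. ?F (length (g1 x), length (g2 x)) x)"
  proof (rule real_list_measurable_compose_countable[where F="?F"])
    show "real_list_measurable M (?F LL)" for LL
      using real_list_measurable_nth[OF g1] real_list_measurable_nth[OF g2]
      by (auto intro!: measurable_If real_list_measurable_map_upt)
    show "(\<lambda>x. (length (g1 x), length (g2 x))) \<in> M \<rightarrow>\<^sub>M count_space UNIV"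
      using real_list_measurable_length[OF g1] real_list_measurable_length[OF g2] by measurable
  qed
  moreover have "?F (length (g1 x), length (g2 x)) x = g1 x @ g2 x" for x
    by (auto intro!: nth_equalityI simp: nth_append)
  ultimately show ?thesis by simp
qed

lemma real_list_measurable_serve_map_upt:
  assumes "\<And>i. f i \<in> borel_measurable M" "d \<in> borel_measurable M"
  shows "real_list_measurable M (\<lambda>x. serve (d x) (map (\<lambda>i. f i x) [0..<L]))"
  using assms
proof (induction L arbitrary: f d)
  case 0 then show ?case by (simp add: real_list_measurable_const)
next
  case (Suc L)
  note [measurable] = Suc.prems
  have "real_list_measurable M (\<lambda>x. if d x < f 0 x then (f 0 x - d x) # map (\<lambda>i. f (Suc i) x) [0..<L]
      else serve (d x - f 0 x) (map (\<lambda>i. f (Suc i) x) [0..<L]))"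
    by (intro real_list_measurable_If real_list_measurable_Cons real_list_measurable_map_upt Suc.IH)
      measurable
  then show ?case by (simp add: map_upt_Suc del: upt_Suc)
qed

lemma real_list_measurable_serve:
  assumes d: "d \<in> borel_measurable M" and g: "real_list_measurable M g"
  shows "real_list_measurable M (\<lambda>x. serve (d x) (g x))"
  by (rule real_list_measurable_cases_length[OF g])
    (intro real_list_measurable_serve_map_upt real_list_measurable_nth[OF g] d)

lemma real_list_measurable_rev_map_upt:
  assumes N: "N \<in> M \<rightarrow>\<^sub>M count_space UNIV" and V: "\<And>j. (\<lambda>x. V x j) \<in> borel_measurable M"
  shows "real_list_measurable M (\<lambda>x. rev (map (V x) [0..<N x]))"
proof -
  have "real_list_measurable M (\<lambda>x. map (\<lambda>i. V x (N x - 1 - i)) [0..<N x])"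
    by (rule real_list_measurable_compose_countable[OF real_list_measurable_map_upt[OF V] N])
  moreover have "rev (map f [0..<n]) = map (\<lambda>i. f (n - 1 - i)) [0..<n]" for f :: "nat \<Rightarrow> real" and n
    by (rule nth_equalityI) (auto simp: rev_nth)
  ultimately show ?thesis by simp
qed

lemma pred_real_list_measurable_length:
  "real_list_measurable M g \<Longrightarrow> Measurable.pred M (\<lambda>x. P (length (g x)))"
  by (drule real_list_measurable_length) (erule measurable_compose, simp)

section \<open>Sample paths started from an arbitrary stack\<close>

type_synonym step = "real \<times> nat \<times> (nat \<Rightarrow> real)"
type_synonym input = "(nat \<Rightarrow> real) \<times> (nat \<Rightarrow> nat) \<times> (nat \<Rightarrow> nat \<Rightarrow> real)"

definition batch_stack :: "nat \<Rightarrow> (nat \<Rightarrow> real) \<Rightarrow> real list" where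
  "batch_stack n v = rev (map v [0..<n])"

fun stack_from :: "real list \<Rightarrow> input \<Rightarrow> nat \<Rightarrow> real list" where
  "stack_from xs w 0 = batch_stack (fst (snd w) 0) (snd (snd w) 0) @ xs"
| "stack_from xs w (Suc k) =
     batch_stack (fst (snd w) (Suc k)) (snd (snd w) (Suc k)) @ serve (fst w k) (stack_from xs w k)"

text \<open>A step \<open>(a, n, v)\<close> is a batch of size \<open>n\<close> with service times \<open>v\<close>, followed by
  \<open>a\<close> time units of service; \<^term>\<open>step_stack xs r\<close> is the stack just before the next arrival.\<close>
definition step_stack :: "real list \<Rightarrow> step \<Rightarrow> real list" where
  "step_stack xs r = serve (fst r) (batch_stack (fst (snd r)) (snd (snd r)) @ xs)"

definition cons_input :: "step \<Rightarrow> input \<Rightarrow> input" where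
  "cons_input r w = (case_nat (fst r) (fst w), case_nat (fst (snd r)) (fst (snd w)),
     case_nat (snd (snd r)) (snd (snd w)))"

definition stays_below :: "nat \<Rightarrow> nat \<Rightarrow> real list \<Rightarrow> input set" where
  "stays_below m k xs = {w. \<forall>j<k. (\<forall>i<j. serve (fst w i) (stack_from xs w i) \<noteq> []) \<longrightarrow>
     length (stack_from xs w j) < m}"

definition never_reaches :: "nat \<Rightarrow> real list \<Rightarrow> input set" where
  "never_reaches m xs = {w. \<forall>j. (\<forall>i<j. serve (fst w i) (stack_from xs w i) \<noteq> []) \<longrightarrow>
     length (stack_from xs w j) < m}"

definition busy_below :: "nat \<Rightarrow> nat \<Rightarrow> real list \<Rightarrow> input set" where
  "busy_below m k xs = {w. \<forall>j<k. length (stack_from xs w j) < m \<and> serve (fst w j) (stack_from xs w j) \<noteq> []}"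

lemma length_batch_stack[simp]: "length (batch_stack n v) = n"
  by (simp add: batch_stack_def)

lemma batch_stack_Suc: "batch_stack (Suc n) v = v n # batch_stack n v"
  by (simp add: batch_stack_def)

lemma set_batch_stack: "set (batch_stack n v) = v ` {..<n}"
  by (auto simp: batch_stack_def)

lemma stack_eq_stack_from: "stack A N V k = stack_from [] (A, N, V) k"
  by (induction k) (simp_all add: batch_def batch_stack_def)

lemma cons_input_sel[simp]:
  "fst (cons_input r w) = case_nat (fst r) (fst w)"
  "fst (snd (cons_input r w)) = case_nat (fst (snd r)) (fst (snd w))"
  "snd (snd (cons_input r w)) = case_nat (snd (snd r)) (snd (snd w))"
  by (simp_all add: cons_input_def)

lemma stack_from_cons_input_Suc: "stack_from xs (cons_input r w) (Suc k) = stack_from (step_stack xs r) w k"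
  by (induction k) (simp_all add: step_stack_def)

lemma stays_below_0[simp]: "stays_below m 0 xs = UNIV"
  and busy_below_0[simp]: "busy_below m 0 xs = UNIV"
  by (simp_all add: stays_below_def busy_below_def)

lemma cons_input_in_stays_below_Suc:
  "cons_input r w \<in> stays_below m (Suc k) xs \<longleftrightarrow>
    fst (snd r) + length xs < m \<and> (step_stack xs r = [] \<or> w \<in> stays_below m k (step_stack xs r))"
  unfolding stays_below_def mem_Collect_eq All_less_Suc2
  by (auto simp: stack_from_cons_input_Suc step_stack_def[symmetric] simp del: stack_from.simps(2))

lemma cons_input_in_busy_below_Suc:
  "cons_input r w \<in> busy_below m (Suc k) xs \<longleftrightarrow>
    fst (snd r) + length xs < m \<and> step_stack xs r \<noteq> [] \<and> w \<in> busy_below m k (step_stack xs r)"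
  unfolding busy_below_def mem_Collect_eq All_less_Suc2
  by (auto simp: stack_from_cons_input_Suc step_stack_def[symmetric] simp del: stack_from.simps(2))

lemma never_reaches_eq_INT: "never_reaches m xs = (\<Inter>k. stays_below m k xs)"
  unfolding never_reaches_def stays_below_def by blast

lemma stays_below_antimono: "k \<le> k' \<Longrightarrow> stays_below m k' xs \<subseteq> stays_below m k xs"
  unfolding stays_below_def by auto

section \<open>The probability model and its one-step decomposition\<close>

definition step_space :: "real \<Rightarrow> nat pmf \<Rightarrow> real measure \<Rightarrow> step measure" where
  "step_space lam Bd Sd = exp_dist lam \<Otimes>\<^sub>M (measure_pmf Bd \<Otimes>\<^sub>M PiM UNIV (\<lambda>_::nat. Sd))"

lemma prob_space_exp_dist: "0 < lam \<Longrightarrow> prob_space (exp_dist lam)"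
  unfolding exp_dist_def by (rule prob_space_exponential_density)

lemma sets_exp_dist[measurable_cong]: "sets (exp_dist lam) = sets borel"
  unfolding exp_dist_def by simp

lemma sets_input_space[measurable_cong]:
  "sets (input_space lam Bd Sd) = sets (PiM UNIV (\<lambda>_::nat. borel) \<Otimes>\<^sub>M
     (PiM UNIV (\<lambda>_::nat. count_space UNIV) \<Otimes>\<^sub>M PiM UNIV (\<lambda>_::nat. PiM UNIV (\<lambda>_::nat. Sd))))"
  unfolding input_space_def by (intro sets_pair_measure_cong sets_PiM_cong refl) (simp_all add: sets_exp_dist)

lemma sets_step_space[measurable_cong]:
  "sets (step_space lam Bd Sd) = sets (borel \<Otimes>\<^sub>M (count_space UNIV \<Otimes>\<^sub>M PiM UNIV (\<lambda>_::nat. Sd)))"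
  unfolding step_space_def by (intro sets_pair_measure_cong sets_PiM_cong refl) (simp_all add: sets_exp_dist)

lemma measurable_cons_input[measurable]:
  "(\<lambda>(r, w). cons_input r w) \<in> step_space lam Bd Sd \<Otimes>\<^sub>M input_space lam Bd Sd \<rightarrow>\<^sub>M input_space lam Bd Sd"
  unfolding cons_input_def step_space_def input_space_def by measurable

locale lcfs_model =
  fixes lam :: real and Bd :: "nat pmf" and Sd :: "real measure"
  assumes lam_pos: "0 < lam" and batch_pos: "0 \<notin> set_pmf Bd"
    and S_prob: "prob_space Sd" and S_borel[measurable_cong]: "sets Sd = sets borel"
    and S_nonneg: "AE s in Sd. 0 \<le> s"
begin

abbreviation "\<Omega> \<equiv> input_space lam Bd Sd"
abbreviation "\<Omega>\<^sub>1 \<equiv> step_space lam Bd Sd"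

lemma prob_space_PiM_S: "prob_space (PiM UNIV (\<lambda>_::nat. Sd))"
  by (simp add: S_prob prob_space_PiM)

lemma prob_space_input: "prob_space \<Omega>"
  unfolding input_space_def
  by (intro prob_space_pair prob_space_PiM prob_space_exp_dist lam_pos S_prob prob_space_measure_pmf)

lemma prob_space_step: "prob_space \<Omega>\<^sub>1"
  unfolding step_space_def
  by (intro prob_space_pair prob_space_PiM prob_space_exp_dist lam_pos S_prob prob_space_measure_pmf)

lemma space_S: "space Sd = UNIV"
  using sets_eq_imp_space_eq[OF S_borel] by simp

lemma space_input: "space \<Omega> = UNIV"
  by (simp add: input_space_def space_pair_measure space_PiM exp_dist_def space_S PiE_def extensional_def)

lemma space_step: "space \<Omega>\<^sub>1 = UNIV"
  by (simp add: step_space_def space_pair_measure space_PiM exp_dist_def space_S PiE_def extensional_def)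

lemma measurable_input_components[measurable]:
  "(\<lambda>w. fst w k) \<in> borel_measurable \<Omega>"
  "(\<lambda>w. fst (snd w) k) \<in> \<Omega> \<rightarrow>\<^sub>M count_space UNIV"
  "(\<lambda>w. snd (snd w) k j) \<in> borel_measurable \<Omega>"
proof -
  show "(\<lambda>w. fst w k) \<in> borel_measurable \<Omega>" "(\<lambda>w. fst (snd w) k) \<in> \<Omega> \<rightarrow>\<^sub>M count_space UNIV"
    by measurable
  have "(\<lambda>w. snd (snd w) k) \<in> \<Omega> \<rightarrow>\<^sub>M PiM UNIV (\<lambda>_::nat. borel)"
    by measurable
  then show "(\<lambda>w. snd (snd w) k j) \<in> borel_measurable \<Omega>"
    by (rule measurable_compose) simp
qed

lemma measurable_step_components[measurable]:
  "fst \<in> borel_measurable \<Omega>\<^sub>1"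
  "(\<lambda>r. fst (snd r)) \<in> \<Omega>\<^sub>1 \<rightarrow>\<^sub>M count_space UNIV"
  "(\<lambda>r. snd (snd r) j) \<in> borel_measurable \<Omega>\<^sub>1"
  by measurable

lemma input_space_cons: "distr (\<Omega>\<^sub>1 \<Otimes>\<^sub>M \<Omega>) \<Omega> (\<lambda>(r, w). cons_input r w) = \<Omega>"
proof -
  let ?EA = "exp_dist lam" and ?B = "measure_pmf Bd" and ?PS = "PiM UNIV (\<lambda>_::nat. Sd)"
  let ?PA = "PiM UNIV (\<lambda>_::nat. ?EA)" and ?PN = "PiM UNIV (\<lambda>_::nat. ?B)"
    and ?PV = "PiM UNIV (\<lambda>_::nat. ?PS)"
  let ?cons = "\<lambda>(s, \<omega>). case_nat s \<omega>"
  have prob: "prob_space ?EA" "prob_space ?B" "prob_space ?PS"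
    by (simp_all add: prob_space_exp_dist lam_pos prob_space_measure_pmf prob_space_PiM_S)
  then have sf: "sigma_finite_measure ?EA" "sigma_finite_measure ?B" "sigma_finite_measure ?PS"
    "sigma_finite_measure ?PA" "sigma_finite_measure ?PN" "sigma_finite_measure ?PV"
    by (simp_all add: prob_space_imp_sigma_finite prob_space_PiM)
  have NV: "distr ((?B \<Otimes>\<^sub>M ?PS) \<Otimes>\<^sub>M (?PN \<Otimes>\<^sub>M ?PV)) (?PN \<Otimes>\<^sub>M ?PV)
      (\<lambda>z. (case_nat (fst (fst z)) (fst (snd z)), case_nat (snd (fst z)) (snd (snd z)))) = ?PN \<Otimes>\<^sub>M ?PV"
    using pair_measure_distr_cons[OF sf(2,5,3,6), of ?cons ?cons] prob
    by (simp add: distr_PiM_nat_cons)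
  have "distr ((?EA \<Otimes>\<^sub>M (?B \<Otimes>\<^sub>M ?PS)) \<Otimes>\<^sub>M (?PA \<Otimes>\<^sub>M (?PN \<Otimes>\<^sub>M ?PV))) (?PA \<Otimes>\<^sub>M (?PN \<Otimes>\<^sub>M ?PV))
      (\<lambda>z. (case_nat (fst (fst z)) (fst (snd z)),
        case_nat (fst (snd (fst z))) (fst (snd (snd z))), case_nat (snd (snd (fst z))) (snd (snd (snd z)))))
    = ?PA \<Otimes>\<^sub>M (?PN \<Otimes>\<^sub>M ?PV)"
    using pair_measure_distr_cons[OF sf(1,4) sigma_finite_pair_measure[OF sf(2,3)]
        sigma_finite_pair_measure[OF sf(5,6)], of ?cons
        "\<lambda>z. (case_nat (fst (fst z)) (fst (snd z)), case_nat (snd (fst z)) (snd (snd z)))"] prob NV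
    by (simp add: distr_PiM_nat_cons)
  moreover have "(\<lambda>(r, w). cons_input r w) = (\<lambda>z. (case_nat (fst (fst z)) (fst (snd z)),
      case_nat (fst (snd (fst z))) (fst (snd (snd z))), case_nat (snd (snd (fst z))) (snd (snd (snd z)))))"
    by (simp add: cons_input_def fun_eq_iff)
  ultimately show ?thesis by (simp add: step_space_def input_space_def)
qed

lemma nn_integral_input_space_cons:
  assumes f[measurable]: "f \<in> borel_measurable \<Omega>"
  shows "(\<integral>\<^sup>+w. f w \<partial>\<Omega>) = (\<integral>\<^sup>+r. \<integral>\<^sup>+w. f (cons_input r w) \<partial>\<Omega> \<partial>\<Omega>\<^sub>1)"
proof -
  interpret \<Omega>: prob_space \<Omega> by (rule prob_space_input)
  have "(\<integral>\<^sup>+w. f w \<partial>\<Omega>) = (\<integral>\<^sup>+z. f (case z of (r, w) \<Rightarrow> cons_input r w) \<partial>(\<Omega>\<^sub>1 \<Otimes>\<^sub>M \<Omega>))"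
    by (subst (1) input_space_cons[symmetric], rule nn_integral_distr) simp_all
  also have "\<dots> = (\<integral>\<^sup>+r. \<integral>\<^sup>+w. f (cons_input r w) \<partial>\<Omega> \<partial>\<Omega>\<^sub>1)"
    by (subst \<Omega>.nn_integral_fst[symmetric]) simp_all
  finally show ?thesis .
qed

lemma emeasure_input_space_cons:
  "X \<in> sets \<Omega> \<Longrightarrow> emeasure \<Omega> X = (\<integral>\<^sup>+r. \<integral>\<^sup>+w. indicator X (cons_input r w) \<partial>\<Omega> \<partial>\<Omega>\<^sub>1)"
  by (simp flip: nn_integral_indicator add: nn_integral_input_space_cons)

lemma measurable_nn_integral_cons_input:
  "X \<in> sets \<Omega> \<Longrightarrow> (\<lambda>r. \<integral>\<^sup>+w. indicator X (cons_input r w) \<partial>\<Omega>) \<in> borel_measurable \<Omega>\<^sub>1"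
proof -
  interpret \<Omega>: prob_space \<Omega> by (rule prob_space_input)
  assume [measurable]: "X \<in> sets \<Omega>"
  show ?thesis
    using \<Omega>.borel_measurable_nn_integral_fst[of "\<lambda>(r, w). indicator X (cons_input r w)" \<Omega>\<^sub>1] by simp
qed


lemma real_list_measurable_stack_from: "real_list_measurable \<Omega> (\<lambda>w. stack_from xs w k)"
  by (induction k) (simp_all add: batch_stack_def real_list_measurable_append
      real_list_measurable_rev_map_upt real_list_measurable_const real_list_measurable_serve)

lemma
  shows sets_stays_below[measurable]: "stays_below m k xs \<in> sets \<Omega>"
    and sets_busy_below[measurable]: "busy_below m k xs \<in> sets \<Omega>"
proof -
  have [measurable]: "Measurable.pred \<Omega> (\<lambda>w. P (length (stack_from xs w j)))" for P j
    by (rule pred_real_list_measurable_length[OF real_list_measurable_stack_from])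
  have "Measurable.pred \<Omega> (\<lambda>w. length (serve (fst w j) (stack_from xs w j)) \<noteq> 0)" for j
    by (intro pred_real_list_measurable_length real_list_measurable_serve real_list_measurable_stack_from)
      measurable
  then have [measurable]: "Measurable.pred \<Omega> (\<lambda>w. serve (fst w j) (stack_from xs w j) \<noteq> [])" for j
    by simp
  have "Measurable.pred \<Omega> (\<lambda>w. w \<in> stays_below m k xs)" "Measurable.pred \<Omega> (\<lambda>w. w \<in> busy_below m k xs)"
    unfolding stays_below_def busy_below_def mem_Collect_eq by measurable
  then show "stays_below m k xs \<in> sets \<Omega>" "busy_below m k xs \<in> sets \<Omega>"
    by (simp_all add: pred_def space_input)
qed

lemma sets_never_reaches[measurable]: "never_reaches m xs \<in> sets \<Omega>"
  unfolding never_reaches_eq_INT by measurable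

lemma real_list_measurable_step_stack: "real_list_measurable \<Omega>\<^sub>1 (\<lambda>r. step_stack xs r)"
  unfolding step_stack_def batch_stack_def
  by (intro real_list_measurable_serve real_list_measurable_append real_list_measurable_rev_map_upt
      real_list_measurable_const) measurable

lemma pred_step_stack_Nil[measurable]: "Measurable.pred \<Omega>\<^sub>1 (\<lambda>r. step_stack xs r = [])"
  using pred_real_list_measurable_length[OF real_list_measurable_step_stack, of "\<lambda>n. n = 0"] by simp

lemma nn_integral_stays_below_cons_input:
  "(\<integral>\<^sup>+w. indicator (stays_below m (Suc k) xs) (cons_input r w) \<partial>\<Omega>) =
    (if fst (snd r) + length xs < m then
      (if step_stack xs r = [] then 1 else emeasure \<Omega> (stays_below m k (step_stack xs r))) else 0)"
proof -
  interpret \<Omega>: prob_space \<Omega> by (rule prob_space_input)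
  consider "\<not> fst (snd r) + length xs < m" | "fst (snd r) + length xs < m" "step_stack xs r = []"
    | "fst (snd r) + length xs < m" "step_stack xs r \<noteq> []"
    by blast
  moreover have "indicator (stays_below m (Suc k) xs) (cons_input r w) = (if fst (snd r) + length xs < m then
      (if step_stack xs r = [] then 1 else indicator (stays_below m k (step_stack xs r)) w) else (0::ennreal))"
    for w
    by (simp add: indicator_def cons_input_in_stays_below_Suc)
  ultimately show ?thesis
    by cases (simp_all add: \<Omega>.emeasure_space_1)
qed

lemma emeasure_stays_below_Suc:
  "emeasure \<Omega> (stays_below m (Suc k) xs) = (\<integral>\<^sup>+r. (if fst (snd r) + length xs < m then
     (if step_stack xs r = [] then 1 else emeasure \<Omega> (stays_below m k (step_stack xs r))) else 0) \<partial>\<Omega>\<^sub>1)"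
  by (simp add: emeasure_input_space_cons nn_integral_stays_below_cons_input)

lemma nn_integral_busy_below_cons_input:
  "(\<integral>\<^sup>+w. indicator (busy_below m (Suc k) xs) (cons_input r w) \<partial>\<Omega>) =
    (if fst (snd r) + length xs < m \<and> step_stack xs r \<noteq> [] then emeasure \<Omega> (busy_below m k (step_stack xs r))
     else 0)"
proof -
  have "indicator (busy_below m (Suc k) xs) (cons_input r w) = (if fst (snd r) + length xs < m \<and>
      step_stack xs r \<noteq> [] then indicator (busy_below m k (step_stack xs r)) w else (0::ennreal))" for w
    by (simp add: indicator_def cons_input_in_busy_below_Suc)
  then show ?thesis
    by (cases "fst (snd r) + length xs < m \<and> step_stack xs r \<noteq> []") (simp_all only: if_P if_not_P, simp_all)
qed

lemma emeasure_busy_below_Suc: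
  "emeasure \<Omega> (busy_below m (Suc k) xs) = (\<integral>\<^sup>+r. (if fst (snd r) + length xs < m \<and> step_stack xs r \<noteq> []
     then emeasure \<Omega> (busy_below m k (step_stack xs r)) else 0) \<partial>\<Omega>\<^sub>1)"
  by (simp add: emeasure_input_space_cons nn_integral_busy_below_cons_input)

lemma measurable_emeasure_busy_below_step[measurable]:
  "(\<lambda>r. if fst (snd r) + length xs < m \<and> step_stack xs r \<noteq> []
     then emeasure \<Omega> (busy_below m k (step_stack xs r)) else 0) \<in> borel_measurable \<Omega>\<^sub>1"
  using measurable_nn_integral_cons_input[of "busy_below m (Suc k) xs"]
  by (simp add: nn_integral_busy_below_cons_input)

lemma pair_sigma_finite_batch: "pair_sigma_finite (measure_pmf Bd) (PiM UNIV (\<lambda>_::nat. Sd))"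
  by (simp add: pair_sigma_finite_def prob_space_imp_sigma_finite prob_space_measure_pmf prob_space_PiM_S)

lemma pair_sigma_finite_step:
  "pair_sigma_finite (exp_dist lam) (measure_pmf Bd \<Otimes>\<^sub>M PiM UNIV (\<lambda>_::nat. Sd))"
  by (simp add: pair_sigma_finite_def prob_space_imp_sigma_finite prob_space_exp_dist lam_pos
      sigma_finite_pair_measure prob_space_measure_pmf prob_space_PiM_S)

lemma nn_integral_step_space:
  assumes F[measurable]: "F \<in> borel_measurable \<Omega>\<^sub>1"
  shows "(\<integral>\<^sup>+r. F r \<partial>\<Omega>\<^sub>1) =
    (\<integral>\<^sup>+n. \<integral>\<^sup>+v. \<integral>\<^sup>+a. F (a, n, v) \<partial>exp_dist lam \<partial>PiM UNIV (\<lambda>_::nat. Sd) \<partial>measure_pmf Bd)"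
proof -
  interpret PS: prob_space "PiM UNIV (\<lambda>_::nat. Sd)" by (rule prob_space_PiM_S)
  interpret EBS: pair_sigma_finite "exp_dist lam" "measure_pmf Bd \<Otimes>\<^sub>M PiM UNIV (\<lambda>_::nat. Sd)"
    by (rule pair_sigma_finite_step)
  have [measurable]: "F \<in> borel_measurable (exp_dist lam \<Otimes>\<^sub>M (measure_pmf Bd \<Otimes>\<^sub>M PiM UNIV (\<lambda>_::nat. Sd)))"
    using F by (simp add: step_space_def)
  have "(\<integral>\<^sup>+r. F r \<partial>\<Omega>\<^sub>1) = (\<integral>\<^sup>+y. \<integral>\<^sup>+a. F (a, y) \<partial>exp_dist lam \<partial>(measure_pmf Bd \<Otimes>\<^sub>M PiM UNIV (\<lambda>_::nat. Sd)))"
    unfolding step_space_def by (rule EBS.nn_integral_snd[symmetric]) measurable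
  also have "\<dots> = (\<integral>\<^sup>+n. \<integral>\<^sup>+v. \<integral>\<^sup>+a. F (a, n, v) \<partial>exp_dist lam \<partial>PiM UNIV (\<lambda>_::nat. Sd) \<partial>measure_pmf Bd)"
    by (rule PS.nn_integral_fst[symmetric]) measurable
  finally show ?thesis .
qed

lemma AE_PiM_S_nonneg: "AE v in PiM UNIV (\<lambda>_::nat. Sd). \<forall>j. 0 \<le> v j"
  unfolding AE_all_countable
  by (intro allI AE_PiM_component[where M="\<lambda>_. Sd" and P="\<lambda>x. 0 \<le> x"]) (simp_all add: S_prob S_nonneg)

lemma AE_step_nonneg: "AE r in \<Omega>\<^sub>1. \<forall>j. 0 \<le> snd (snd r) j"
proof -
  interpret BS: pair_sigma_finite "measure_pmf Bd" "PiM UNIV (\<lambda>_::nat. Sd)"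
    by (rule pair_sigma_finite_batch)
  interpret EBS: pair_sigma_finite "exp_dist lam" "measure_pmf Bd \<Otimes>\<^sub>M PiM UNIV (\<lambda>_::nat. Sd)"
    by (rule pair_sigma_finite_step)
  have "AE y in measure_pmf Bd \<Otimes>\<^sub>M PiM UNIV (\<lambda>_::nat. Sd). \<forall>j. 0 \<le> snd y j"
    using AE_PiM_S_nonneg by (intro BS.AE_pair_measure) simp_all
  then show ?thesis
    unfolding step_space_def by (intro EBS.AE_pair_measure) simp_all
qed

end

section \<open>The candidate probability of staying below a level\<close>

text \<open>The customer at height \<open>p\<close> above the bottom of the stack gets weight \<open>q p\<close>.\<close>
primrec weighted_work :: "(nat \<Rightarrow> real) \<Rightarrow> real list \<Rightarrow> real" where
  "weighted_work q [] = 0"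
| "weighted_work q (x # xs) = q (Suc (length xs)) * x + weighted_work q xs"

definition stay_below_prob :: "(nat \<Rightarrow> real) \<Rightarrow> real \<Rightarrow> real list \<Rightarrow> real" where
  "stay_below_prob q lam ys = (1 - q (length ys)) * exp (- lam * weighted_work q ys)"

lemma weighted_work_conv_sum: "weighted_work q ys = (\<Sum>i<length ys. q (length ys - i) * ys ! i)"
  by (induction ys) (simp_all add: sum.lessThan_Suc_shift del: sum.lessThan_Suc)

lemma weighted_work_batch_stack_append:
  "weighted_work q (batch_stack n v @ xs) = (\<Sum>j<n. q (length xs + j + 1) * v j) + weighted_work q xs"
  by (induction n) (simp_all add: batch_stack_Suc algebra_simps batch_stack_def)

lemma weighted_work_nonneg: "(\<And>d. 0 \<le> q d) \<Longrightarrow> \<forall>x\<in>set ys. 0 \<le> x \<Longrightarrow> 0 \<le> weighted_work q ys"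
  by (induction ys) auto

lemma stay_below_prob_nonneg: "(\<And>d. q d \<le> 1) \<Longrightarrow> 0 \<le> stay_below_prob q lam ys"
  unfolding stay_below_prob_def by simp

lemma stay_below_prob_le_1:
  assumes "\<And>d. 0 \<le> q d" "\<And>d. q d \<le> 1" "0 < lam" "\<forall>x\<in>set ys. 0 \<le> x"
  shows "stay_below_prob q lam ys \<le> 1"
proof -
  have "exp (- lam * weighted_work q ys) \<le> 1"
    using weighted_work_nonneg[of q ys] assms by simp
  then show ?thesis
    unfolding stay_below_prob_def using assms(1,2)[of "length ys"] by (simp add: mult_le_one)
qed

lemma measurable_stay_below_prob:
  assumes "real_list_measurable M g"
  shows "(\<lambda>x. stay_below_prob q lam (g x)) \<in> borel_measurable M"
proof -
  have "(\<lambda>x. (\<lambda>L x. (1 - q L) * exp (- lam * (\<Sum>i<L. q (L - i) * g x ! i))) (length (g x)) x)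
      \<in> borel_measurable M"
    by (rule measurable_compose_countable[OF _ real_list_measurable_length[OF assms]])
      (use real_list_measurable_nth[OF assms] in measurable)
  then show ?thesis by (simp add: stay_below_prob_def weighted_work_conv_sum)
qed

lemma serve_nonneg: "\<forall>x\<in>set ys. 0 \<le> x \<Longrightarrow> \<forall>x\<in>set (serve d ys). 0 \<le> x"
  by (induction ys arbitrary: d) auto

lemma step_stack_nonneg:
  "\<forall>x\<in>set xs. 0 \<le> x \<Longrightarrow> \<forall>j. 0 \<le> snd (snd r) j \<Longrightarrow> \<forall>x\<in>set (step_stack xs r). 0 \<le> x"
  unfolding step_stack_def by (rule serve_nonneg) (auto simp: set_batch_stack)

section \<open>Exponential interarrival times\<close>

lemma emeasure_exp_dist_lessThan:
  assumes lam: "0 < lam" and e: "0 \<le> e"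
  shows "emeasure (exp_dist lam) {..<e} = ennreal (1 - exp (- lam * e))"
proof -
  have "emeasure (exp_dist lam) {..<e} = (\<integral>\<^sup>+a. ennreal (exponential_density lam a) * indicator {..<e} a \<partial>lborel)"
    unfolding exp_dist_def by (rule emeasure_density) auto
  also have "\<dots> = (\<integral>\<^sup>+a. ennreal (lam * exp (- lam * a)) * indicator {0..e} a \<partial>lborel)"
    using AE_lborel_singleton[of e]
    by (intro nn_integral_cong_AE, eventually_elim) (auto simp: exponential_density_def indicator_def mult.commute)
  also have "\<dots> = (- exp (- lam * e)) - (- exp (- lam * 0))"
    by (rule nn_integral_FTC_Icc[OF _ _ _ e]) (use lam in \<open>auto intro!: derivative_eq_intros\<close>)
  finally show ?thesis by simp
qed

text \<open>Memorylessness: past the threshold \<open>y\<close> the exponential law restarts, scaled by \<open>e\<^sup>-\<^sup>\<lambda>\<^sup>y\<close>.\<close>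
lemma nn_integral_exp_dist_split:
  assumes lam: "0 < lam" and y: "0 \<le> y" and f_nonneg: "\<And>a. 0 \<le> f a"
    and [measurable]: "f \<in> borel_measurable borel" "g \<in> borel_measurable borel"
  shows "(\<integral>\<^sup>+a. (if a < y then ennreal (f a) else g (a - y)) \<partial>exp_dist lam) =
    (\<integral>\<^sup>+a. ennreal (lam * exp (- lam * a) * f a) * indicator {0..y} a \<partial>lborel) +
    ennreal (exp (- lam * y)) * (\<integral>\<^sup>+a. g a \<partial>exp_dist lam)"
proof -
  let ?ed = "exponential_density lam"
  have "(\<integral>\<^sup>+a. (if a < y then ennreal (f a) else g (a - y)) \<partial>exp_dist lam) =
      (\<integral>\<^sup>+a. ennreal (?ed a) * (if a < y then ennreal (f a) else g (a - y)) \<partial>lborel)"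
    unfolding exp_dist_def by (rule nn_integral_density) measurable
  also have "\<dots> = (\<integral>\<^sup>+a. ennreal (lam * exp (- lam * a) * f a) * indicator {0..y} a +
      ennreal (exp (- lam * y)) * (ennreal (?ed (a - y)) * g (a - y)) \<partial>lborel)"
    using AE_lborel_singleton[of y]
  proof (intro nn_integral_cong_AE, eventually_elim)
    case (elim a)
    have "?ed a = exp (- lam * y) * ?ed (a - y)" if "y < a"
      using that y by (simp add: exponential_density_def algebra_simps flip: exp_add)
    moreover have "0 \<le> ?ed (a - y)"
      using lam by (simp add: exponential_density_def)
    ultimately show ?case
      using elim lam f_nonneg[of a]
      by (auto simp: exponential_density_def ennreal_mult[symmetric] mult.commute mult.left_commute
          indicator_def not_less)
  qed
  also have "\<dots> = (\<integral>\<^sup>+a. ennreal (lam * exp (- lam * a) * f a) * indicator {0..y} a \<partial>lborel) +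
      ennreal (exp (- lam * y)) * (\<integral>\<^sup>+a. ennreal (?ed (a - y)) * g (a - y) \<partial>lborel)"
    by (subst nn_integral_add, measurable) (simp add: nn_integral_cmult)
  also have "(\<integral>\<^sup>+a. ennreal (?ed (a - y)) * g (a - y) \<partial>lborel) = (\<integral>\<^sup>+s. ennreal (?ed s) * g s \<partial>lborel)"
    using nn_integral_real_affine[of "\<lambda>s. ennreal (?ed s) * g s" 1 "- y"] by simp
  also have "\<dots> = (\<integral>\<^sup>+s. g s \<partial>exp_dist lam)"
    unfolding exp_dist_def by (rule nn_integral_density[symmetric]) measurable
  finally show ?thesis .
qed

lemma nn_integral_exp_interval:
  assumes lam: "0 < lam" and p: "0 \<le> p" "p \<le> 1" and y: "0 \<le> y"
  shows "(\<integral>\<^sup>+a. ennreal (lam * exp (- lam * a) * ((1 - p) * exp (- lam * (p * (y - a) + w)))) *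
      indicator {0..y} a \<partial>lborel) = ennreal ((exp (- lam * p * y) - exp (- lam * y)) * exp (- lam * w))"
proof -
  define F where "F a = - exp (- lam * p * y) * exp (- lam * (1 - p) * a) * exp (- lam * w)" for a
  have "(\<integral>\<^sup>+a. ennreal (lam * exp (- lam * a) * ((1 - p) * exp (- lam * (p * (y - a) + w)))) *
      indicator {0..y} a \<partial>lborel) = F y - F 0"
    by (rule nn_integral_FTC_Icc[OF _ _ _ y])
      (use lam p in \<open>auto intro!: derivative_eq_intros simp: F_def algebra_simps simp flip: exp_add\<close>)
  also have "F y - F 0 = (exp (- lam * p * y) - exp (- lam * y)) * exp (- lam * w)"
    by (simp add: F_def algebra_simps flip: exp_add)
  finally show ?thesis .
qed

lemma nn_integral_exp_dist_serve:
  fixes q :: "nat \<Rightarrow> real"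
  assumes lam: "0 < lam" and q: "\<And>d. 0 \<le> q d" "\<And>d. q d \<le> 1" and ys: "\<forall>y\<in>set ys. 0 \<le> y"
  shows "(\<integral>\<^sup>+a. (if serve a ys = [] then 1 else ennreal (stay_below_prob q lam (serve a ys))) \<partial>exp_dist lam) =
    ennreal (exp (- lam * weighted_work q ys))"
  using ys
proof (induction ys)
  case Nil
  interpret prob_space "exp_dist lam" by (rule prob_space_exp_dist[OF lam])
  show ?case by (simp add: emeasure_space_1)
next
  case (Cons y t)
  define p where "p = q (Suc (length t))"
  define w where "w = weighted_work q t"
  define h where "h s = (if serve s t = [] then 1 else ennreal (stay_below_prob q lam (serve s t)))" for s
  have y: "0 \<le> y" and p: "0 \<le> p" "p \<le> 1" using Cons.prems q by (auto simp: p_def)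
  have [measurable]: "h \<in> borel_measurable borel"
  proof -
    have serve_t: "real_list_measurable borel (\<lambda>s. serve s t)"
      by (rule real_list_measurable_serve[OF _ real_list_measurable_const]) simp
    then have [measurable]: "Measurable.pred borel (\<lambda>s. serve s t = [])"
      using pred_real_list_measurable_length[of borel _ "\<lambda>n. n = 0"] by simp
    show ?thesis
      unfolding h_def using measurable_stay_below_prob[OF serve_t] by measurable
  qed
  have "(\<integral>\<^sup>+a. (if serve a (y # t) = [] then 1 else ennreal (stay_below_prob q lam (serve a (y # t))))
        \<partial>exp_dist lam) =
      (\<integral>\<^sup>+a. (if a < y then ennreal ((1 - p) * exp (- lam * (p * (y - a) + w))) else h (a - y)) \<partial>exp_dist lam)"
    by (intro nn_integral_cong, case_tac "x < y") (simp_all add: h_def stay_below_prob_def p_def w_def)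
  also have "\<dots> = (\<integral>\<^sup>+a. ennreal (lam * exp (- lam * a) * ((1 - p) * exp (- lam * (p * (y - a) + w)))) *
      indicator {0..y} a \<partial>lborel) + ennreal (exp (- lam * y)) * (\<integral>\<^sup>+a. h a \<partial>exp_dist lam)"
    by (rule nn_integral_exp_dist_split[OF lam y]) (use p in simp_all)
  also have "\<dots> = ennreal ((exp (- lam * p * y) - exp (- lam * y)) * exp (- lam * w)) +
      ennreal (exp (- lam * y)) * ennreal (exp (- lam * w))"
    using Cons.IH Cons.prems by (simp only: nn_integral_exp_interval[OF lam p y] h_def w_def) simp
  also have "\<dots> = ennreal (exp (- lam * weighted_work q (y # t)))"
  proof -
    have "exp (- lam * y) \<le> exp (- lam * p * y)"
      using lam y p by (simp add: mult_left_mono mult_right_mono)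
    then show ?thesis
      by (simp add: p_def w_def ennreal_mult''[symmetric] ennreal_plus[symmetric] algebra_simps
          del: ennreal_plus flip: exp_add)
  qed
  finally show ?case .
qed

section \<open>Laplace transforms and the overflow recursion\<close>

definition laplace_transform :: "real measure \<Rightarrow> real \<Rightarrow> real" where
  "laplace_transform M \<theta> = (\<integral>s. exp (- \<theta> * s) \<partial>M)"

lemma
  assumes M: "prob_space M" "sets M = sets borel" "AE s in M. 0 \<le> s" and \<theta>: "0 \<le> \<theta>"
  shows integrable_laplace_transform: "integrable M (\<lambda>s. exp (- \<theta> * s))"
    and nn_integral_laplace_transform:
      "(\<integral>\<^sup>+s. ennreal (exp (- \<theta> * s)) \<partial>M) = ennreal (laplace_transform M \<theta>)"
    and laplace_transform_nonneg: "0 \<le> laplace_transform M \<theta>"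
    and laplace_transform_le_1: "laplace_transform M \<theta> \<le> 1"
proof -
  interpret prob_space M by (rule M(1))
  have [measurable]: "(\<lambda>s. exp (- \<theta> * s)) \<in> borel_measurable M"
    by (subst measurable_cong_sets[OF M(2) refl]) measurable
  have bound: "AE s in M. norm (exp (- \<theta> * s)) \<le> 1"
    using M(3) by eventually_elim (use \<theta> in simp)
  show int: "integrable M (\<lambda>s. exp (- \<theta> * s))"
    by (rule integrable_const_bound[OF bound]) measurable
  show "(\<integral>\<^sup>+s. ennreal (exp (- \<theta> * s)) \<partial>M) = ennreal (laplace_transform M \<theta>)"
    unfolding laplace_transform_def by (rule nn_integral_eq_integral[OF int]) simp
  show "0 \<le> laplace_transform M \<theta>"
    unfolding laplace_transform_def by simp
  have "laplace_transform M \<theta> \<le> (\<integral>s. 1 \<partial>M)"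
    unfolding laplace_transform_def by (rule integral_mono_AE[OF int]) (use bound in auto)
  then show "laplace_transform M \<theta> \<le> 1" by (simp add: prob_space)
qed

lemma laplace_transform_antimono:
  assumes M: "prob_space M" "sets M = sets borel" "AE s in M. 0 \<le> s" and \<theta>: "0 \<le> \<theta>" "\<theta> \<le> \<theta>'"
  shows "laplace_transform M \<theta>' \<le> laplace_transform M \<theta>"
  unfolding laplace_transform_def
  using M(3) integrable_laplace_transform[OF M] \<theta>
  by (intro integral_mono_AE) (auto elim!: eventually_mono intro!: mult_right_mono)

lemma laplace_transform_mono_lt_ge:
  assumes M: "prob_space M" "sets M = sets borel" "AE s in M. 0 \<le> s"
    and M': "prob_space M'" "sets M' = sets borel" "AE s in M'. 0 \<le> s"
    and lt: "lt_ge M M'" and \<theta>: "0 \<le> \<theta>"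
  shows "laplace_transform M \<theta> \<le> laplace_transform M' \<theta>"
proof (cases "\<theta> = 0")
  case True
  then show ?thesis
    using prob_space.prob_space[OF M(1)] prob_space.prob_space[OF M'(1)] by (simp add: laplace_transform_def)
next
  case False
  with \<theta> show ?thesis
    using lt integrable_laplace_transform[OF M \<theta>] integrable_laplace_transform[OF M' \<theta>]
    unfolding lt_ge_def laplace_transform_def by simp
qed

lemma integral_measure_pmf_unit_interval:
  fixes h :: "nat \<Rightarrow> real"
  assumes "\<And>n. 0 \<le> h n" "\<And>n. h n \<le> 1"
  shows "integrable (measure_pmf B) h" "0 \<le> (\<integral>n. h n \<partial>measure_pmf B)" "(\<integral>n. h n \<partial>measure_pmf B) \<le> 1"
proof -
  show int: "integrable (measure_pmf B) h"
    by (rule measure_pmf.integrable_const_bound[where B=1]) (use assms in auto)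
  show "0 \<le> (\<integral>n. h n \<partial>measure_pmf B)" using assms by simp
  have "(\<integral>n. h n \<partial>measure_pmf B) \<le> (\<integral>n. 1 \<partial>measure_pmf B)"
    by (rule integral_mono[OF int]) (use assms in auto)
  then show "(\<integral>n. h n \<partial>measure_pmf B) \<le> 1" by simp
qed

text \<open>If \<open>\<phi> x\<close> is the probability that a service time sees no arrival of a Poisson stream of rate
  \<open>\<lambda> x\<close>, then \<^term>\<open>overflow_prob \<phi> B m d\<close> is the probability that a batch arriving to \<open>d\<close>
  customers drives the number in system up to \<open>m\<close> before it has been served. The recursion
  bottoms out after \<open>m - d\<close> rounds; the fuel \<open>k\<close> avoids a recursion through the integral.\<close>
primrec overflow_iter :: "(real \<Rightarrow> real) \<Rightarrow> nat pmf \<Rightarrow> nat \<Rightarrow> nat \<Rightarrow> nat \<Rightarrow> real" where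
  "overflow_iter \<phi> B m 0 d = 1"
| "overflow_iter \<phi> B m (Suc k) d = (if m \<le> d then 1 else
     1 - (\<integral>n. (if d + n < m then \<Prod>j<n. \<phi> (overflow_iter \<phi> B m k (d + j + 1)) else 0) \<partial>measure_pmf B))"

definition overflow_prob :: "(real \<Rightarrow> real) \<Rightarrow> nat pmf \<Rightarrow> nat \<Rightarrow> nat \<Rightarrow> real" where
  "overflow_prob \<phi> B m d = overflow_iter \<phi> B m m d"

context
  fixes \<phi> :: "real \<Rightarrow> real"
  assumes \<phi>: "\<And>x. 0 \<le> x \<Longrightarrow> x \<le> 1 \<Longrightarrow> 0 \<le> \<phi> x \<and> \<phi> x \<le> 1"
begin

lemma overflow_iter_bounds: "0 \<le> overflow_iter \<phi> B m k d \<and> overflow_iter \<phi> B m k d \<le> 1"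
proof (induction k arbitrary: d)
  case (Suc k)
  let ?h = "\<lambda>n. if d + n < m then \<Prod>j<n. \<phi> (overflow_iter \<phi> B m k (d + j + 1)) else 0"
  have "0 \<le> ?h n \<and> ?h n \<le> 1" for n
    using \<phi> Suc.IH by (auto intro: prod_nonneg prod_le_1)
  with integral_measure_pmf_unit_interval[of ?h B] show ?case by auto
qed simp

lemma overflow_iter_stable: "m - d \<le> k \<Longrightarrow> overflow_iter \<phi> B m (Suc k) d = overflow_iter \<phi> B m k d"
proof (induction k arbitrary: d)
  case (Suc k)
  have "overflow_iter \<phi> B m (Suc k) (d + j + 1) = overflow_iter \<phi> B m k (d + j + 1)"
    if "d + n < m" "j < n" for n j
    using Suc that by (intro Suc.IH) auto
  then show ?case
    by (auto simp del: overflow_iter.simps(2) simp: overflow_iter.simps(2)[of _ _ _ "Suc k"]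
        overflow_iter.simps(2)[of _ _ _ k] intro!: Bochner_Integration.integral_cong prod.cong)
qed simp

lemma overflow_prob_bounds: "0 \<le> overflow_prob \<phi> B m d" "overflow_prob \<phi> B m d \<le> 1"
  unfolding overflow_prob_def using overflow_iter_bounds by auto

lemma overflow_prob_ge: "m \<le> d \<Longrightarrow> overflow_prob \<phi> B m d = 1"
  unfolding overflow_prob_def by (cases m) simp_all

lemma overflow_prob_eq:
  "d < m \<Longrightarrow> 1 - overflow_prob \<phi> B m d =
    (\<integral>n. (if d + n < m then \<Prod>j<n. \<phi> (overflow_prob \<phi> B m (d + j + 1)) else 0) \<partial>measure_pmf B)"
proof -
  assume "d < m"
  then have "overflow_iter \<phi> B m m d = 1 - (\<integral>n. (if d + n < m then
      \<Prod>j<n. \<phi> (overflow_iter \<phi> B m m (d + j + 1)) else 0) \<partial>measure_pmf B)"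
    using overflow_iter_stable[of m d m B] by simp
  then show ?thesis unfolding overflow_prob_def by simp
qed

end

lemma overflow_iter_antimono:
  assumes \<phi>: "\<And>x. 0 \<le> x \<Longrightarrow> x \<le> 1 \<Longrightarrow> 0 \<le> \<phi> x \<and> \<phi> x \<le> \<phi>' x"
    and \<phi>': "\<And>x. 0 \<le> x \<Longrightarrow> x \<le> 1 \<Longrightarrow> \<phi>' x \<le> 1"
    and \<phi>'_antimono: "\<And>x y. 0 \<le> x \<Longrightarrow> x \<le> y \<Longrightarrow> y \<le> 1 \<Longrightarrow> \<phi>' y \<le> \<phi>' x"
  shows "overflow_iter \<phi>' B m k d \<le> overflow_iter \<phi> B m k d"
proof (induction k arbitrary: d)
  case (Suc k)
  let ?h = "\<lambda>n. if d + n < m then \<Prod>j<n. \<phi> (overflow_iter \<phi> B m k (d + j + 1)) else 0"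
  let ?h' = "\<lambda>n. if d + n < m then \<Prod>j<n. \<phi>' (overflow_iter \<phi>' B m k (d + j + 1)) else 0"
  have bounds: "0 \<le> overflow_iter \<phi> B m k i \<and> overflow_iter \<phi> B m k i \<le> 1"
    "0 \<le> overflow_iter \<phi>' B m k i \<and> overflow_iter \<phi>' B m k i \<le> 1" for i
    using \<phi> \<phi>' by (intro overflow_iter_bounds; force)+
  have \<phi>_le: "0 \<le> \<phi> (overflow_iter \<phi> B m k i)" "\<phi> (overflow_iter \<phi> B m k i) \<le> \<phi>' (overflow_iter \<phi>' B m k i)"
    "0 \<le> \<phi>' (overflow_iter \<phi>' B m k i)" "\<phi>' (overflow_iter \<phi>' B m k i) \<le> 1" for i
    using \<phi>[of "overflow_iter \<phi> B m k i"] \<phi>[of "overflow_iter \<phi>' B m k i"] \<phi>'[of "overflow_iter \<phi>' B m k i"]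
      \<phi>'_antimono[of "overflow_iter \<phi>' B m k i" "overflow_iter \<phi> B m k i"] bounds[of i] Suc.IH[of i]
    by auto
  have "0 \<le> ?h n \<and> ?h n \<le> 1" "0 \<le> ?h' n \<and> ?h' n \<le> 1" for n
    using \<phi>_le order_trans[OF \<phi>_le(2,4)] by (auto intro!: prod_nonneg prod_le_1)
  moreover have "?h n \<le> ?h' n" for n
    using \<phi>_le by (auto intro!: prod_mono)
  ultimately have "(\<integral>n. ?h n \<partial>measure_pmf B) \<le> (\<integral>n. ?h' n \<partial>measure_pmf B)"
    by (intro integral_mono integral_measure_pmf_unit_interval(1)) auto
  then show ?case by simp
qed simp

section \<open>The probability of never reaching a level\<close>

context lcfs_model
begin

abbreviation \<phi> :: "real \<Rightarrow> real" where
  "\<phi> \<equiv> \<lambda>x. laplace_transform Sd (lam * x)"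

abbreviation q :: "nat \<Rightarrow> nat \<Rightarrow> real" where
  "q m \<equiv> overflow_prob \<phi> Bd m"

lemma \<phi>_bounds: "0 \<le> x \<Longrightarrow> 0 \<le> \<phi> x \<and> \<phi> x \<le> 1"
  using laplace_transform_nonneg laplace_transform_le_1 S_prob S_borel S_nonneg lam_pos by simp

lemma q_bounds: "0 \<le> q m d" "q m d \<le> 1"
  using overflow_prob_bounds[of \<phi>] \<phi>_bounds by auto

lemma nn_integral_exp_weighted_work_batch:
  "(\<integral>\<^sup>+v. ennreal (exp (- lam * weighted_work (q m) (batch_stack n v @ xs))) \<partial>PiM UNIV (\<lambda>_::nat. Sd)) =
    ennreal (exp (- lam * weighted_work (q m) xs)) * ennreal (\<Prod>j<n. \<phi> (q m (length xs + j + 1)))"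
proof -
  have [measurable]: "(\<lambda>x. ennreal (exp (- lam * q m (length xs + j + 1) * x))) \<in> borel_measurable Sd" for j
    by (subst measurable_cong_sets[OF S_borel refl]) measurable
  have "(\<integral>\<^sup>+v. ennreal (exp (- lam * weighted_work (q m) (batch_stack n v @ xs))) \<partial>PiM UNIV (\<lambda>_::nat. Sd)) =
      ennreal (exp (- lam * weighted_work (q m) xs)) *
      (\<integral>\<^sup>+v. (\<Prod>j<n. ennreal (exp (- lam * q m (length xs + j + 1) * v j))) \<partial>PiM UNIV (\<lambda>_::nat. Sd))"
    by (subst nn_integral_cmult[symmetric], measurable)
      (simp add: weighted_work_batch_stack_append prod_ennreal ennreal_mult[symmetric]
        exp_sum[symmetric] sum_distrib_left algebra_simps flip: exp_add)
  also have "(\<integral>\<^sup>+v. (\<Prod>j<n. ennreal (exp (- lam * q m (length xs + j + 1) * v j))) \<partial>PiM UNIV (\<lambda>_::nat. Sd)) =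
      (\<Prod>j<n. ennreal (\<phi> (q m (length xs + j + 1))))"
  proof -
    have "(\<integral>\<^sup>+x. ennreal (exp (- lam * q m i * x)) \<partial>Sd) = ennreal (\<phi> (q m i))" for i
      using nn_integral_laplace_transform[OF S_prob S_borel S_nonneg, of "lam * q m i"] q_bounds lam_pos
      by simp
    then show ?thesis
      by (subst nn_integral_PiM_prod_lessThan[OF S_prob]) simp_all
  qed
  also have "\<dots> = ennreal (\<Prod>j<n. \<phi> (q m (length xs + j + 1)))"
    using \<phi>_bounds q_bounds by (intro prod_ennreal) auto
  finally show ?thesis .
qed

lemma integral_batch_no_overflow:
  "(\<integral>n. (if n + length xs < m then \<Prod>j<n. \<phi> (q m (length xs + j + 1)) else 0) \<partial>measure_pmf Bd) =
    1 - q m (length xs)"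
proof (cases "length xs < m")
  case True
  then show ?thesis
    using overflow_prob_eq[of \<phi> "length xs" m Bd] \<phi>_bounds by (simp add: add.commute)
next
  case False
  then show ?thesis
    using overflow_prob_ge[of \<phi> m "length xs" Bd] \<phi>_bounds by simp
qed

lemma nn_integral_step_given_batch_size:
  assumes xs: "\<forall>x\<in>set xs. 0 \<le> x"
  shows "(\<integral>\<^sup>+v. \<integral>\<^sup>+a. (if n + length xs < m then (if step_stack xs (a, n, v) = [] then 1
      else ennreal (stay_below_prob (q m) lam (step_stack xs (a, n, v)))) else 0) \<partial>exp_dist lam \<partial>PiM UNIV (\<lambda>_::nat. Sd)) =
    ennreal (exp (- lam * weighted_work (q m) xs)) *
    ennreal (if n + length xs < m then \<Prod>j<n. \<phi> (q m (length xs + j + 1)) else 0)"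
proof (cases "n + length xs < m")
  case True
  have "(\<integral>\<^sup>+v. \<integral>\<^sup>+a. (if step_stack xs (a, n, v) = [] then 1
      else ennreal (stay_below_prob (q m) lam (step_stack xs (a, n, v)))) \<partial>exp_dist lam \<partial>PiM UNIV (\<lambda>_::nat. Sd)) =
    (\<integral>\<^sup>+v. ennreal (exp (- lam * weighted_work (q m) (batch_stack n v @ xs))) \<partial>PiM UNIV (\<lambda>_::nat. Sd))"
    unfolding step_stack_def fst_conv snd_conv
    using AE_PiM_S_nonneg
  proof (intro nn_integral_cong_AE, eventually_elim)
    case (elim v)
    with xs show ?case
      by (intro nn_integral_exp_dist_serve[OF lam_pos q_bounds]) (auto simp: set_batch_stack)
  qed
  with True show ?thesis
    using nn_integral_exp_weighted_work_batch[of m n xs] by simp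
qed simp

lemma nn_integral_stay_below_prob_step:
  assumes xs: "\<forall>x\<in>set xs. 0 \<le> x"
  shows "(\<integral>\<^sup>+r. (if fst (snd r) + length xs < m then (if step_stack xs r = [] then 1
      else ennreal (stay_below_prob (q m) lam (step_stack xs r))) else 0) \<partial>\<Omega>\<^sub>1) =
    ennreal (stay_below_prob (q m) lam xs)"
proof -
  let ?P = "\<lambda>n. if n + length xs < m then \<Prod>j<n. \<phi> (q m (length xs + j + 1)) else 0"
  have P: "0 \<le> ?P n \<and> ?P n \<le> 1" for n
    using \<phi>_bounds q_bounds by (auto intro!: prod_nonneg prod_le_1)
  have [measurable]: "(\<lambda>r. stay_below_prob (q m) lam (step_stack xs r)) \<in> borel_measurable \<Omega>\<^sub>1"
    by (rule measurable_stay_below_prob[OF real_list_measurable_step_stack])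
  have "(\<integral>\<^sup>+r. (if fst (snd r) + length xs < m then (if step_stack xs r = [] then 1
      else ennreal (stay_below_prob (q m) lam (step_stack xs r))) else 0) \<partial>\<Omega>\<^sub>1) =
    (\<integral>\<^sup>+n. ennreal (exp (- lam * weighted_work (q m) xs)) * ennreal (?P n) \<partial>measure_pmf Bd)"
    by (subst nn_integral_step_space) (simp_all add: nn_integral_step_given_batch_size[OF xs])
  also have "\<dots> = ennreal (exp (- lam * weighted_work (q m) xs)) * ennreal (\<integral>n. ?P n \<partial>measure_pmf Bd)"
    using P integral_measure_pmf_unit_interval(1)[of ?P Bd]
    by (simp add: nn_integral_cmult nn_integral_eq_integral)
  also have "\<dots> = ennreal (stay_below_prob (q m) lam xs)"
    using q_bounds
    by (simp add: integral_batch_no_overflow stay_below_prob_def ennreal_mult[symmetric] mult.commute)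
  finally show ?thesis .
qed

lemma stay_below_prob_le_emeasure_stays_below:
  "\<forall>x\<in>set xs. 0 \<le> x \<Longrightarrow> ennreal (stay_below_prob (q m) lam xs) \<le> emeasure \<Omega> (stays_below m k xs)"
proof (induction k arbitrary: xs)
  case 0
  interpret \<Omega>: prob_space \<Omega> by (rule prob_space_input)
  show ?case
    using stay_below_prob_le_1[OF _ _ lam_pos 0] q_bounds
    by (simp add: \<Omega>.emeasure_space_1[unfolded space_input])
next
  case (Suc k)
  have "ennreal (stay_below_prob (q m) lam xs) = (\<integral>\<^sup>+r. (if fst (snd r) + length xs < m then
      (if step_stack xs r = [] then 1 else ennreal (stay_below_prob (q m) lam (step_stack xs r))) else 0) \<partial>\<Omega>\<^sub>1)"
    by (rule nn_integral_stay_below_prob_step[OF Suc.prems, symmetric])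
  also have "\<dots> \<le> (\<integral>\<^sup>+r. (if fst (snd r) + length xs < m then
      (if step_stack xs r = [] then 1 else emeasure \<Omega> (stays_below m k (step_stack xs r))) else 0) \<partial>\<Omega>\<^sub>1)"
    using AE_step_nonneg
    by (intro nn_integral_mono_AE, eventually_elim)
      (auto intro!: Suc.IH step_stack_nonneg[OF Suc.prems])
  also have "\<dots> = emeasure \<Omega> (stays_below m (Suc k) xs)"
    by (rule emeasure_stays_below_Suc[symmetric])
  finally show ?case .
qed

lemma emeasure_stays_below_le:
  "\<forall>x\<in>set xs. 0 \<le> x \<Longrightarrow>
    emeasure \<Omega> (stays_below m k xs) \<le> ennreal (stay_below_prob (q m) lam xs) + emeasure \<Omega> (busy_below m k xs)"
proof (induction k arbitrary: xs)
  case 0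
  interpret \<Omega>: prob_space \<Omega> by (rule prob_space_input)
  show ?case
    by (simp add: \<Omega>.emeasure_space_1[unfolded space_input])
next
  case (Suc k)
  have [measurable]: "(\<lambda>r. stay_below_prob (q m) lam (step_stack xs r)) \<in> borel_measurable \<Omega>\<^sub>1"
    by (rule measurable_stay_below_prob[OF real_list_measurable_step_stack])
  have "emeasure \<Omega> (stays_below m (Suc k) xs) = (\<integral>\<^sup>+r. (if fst (snd r) + length xs < m then
      (if step_stack xs r = [] then 1 else emeasure \<Omega> (stays_below m k (step_stack xs r))) else 0) \<partial>\<Omega>\<^sub>1)"
    by (rule emeasure_stays_below_Suc)
  also have "\<dots> \<le> (\<integral>\<^sup>+r. (if fst (snd r) + length xs < m then (if step_stack xs r = [] then 1
      else ennreal (stay_below_prob (q m) lam (step_stack xs r))) else 0) +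
      (if fst (snd r) + length xs < m \<and> step_stack xs r \<noteq> []
       then emeasure \<Omega> (busy_below m k (step_stack xs r)) else 0) \<partial>\<Omega>\<^sub>1)"
    using AE_step_nonneg
    by (intro nn_integral_mono_AE, eventually_elim)
      (auto dest: Suc.IH[OF step_stack_nonneg[OF Suc.prems]])
  also have "\<dots> = ennreal (stay_below_prob (q m) lam xs) + emeasure \<Omega> (busy_below m (Suc k) xs)"
    by (subst nn_integral_add)
      (simp_all add: nn_integral_stay_below_prob_step[OF Suc.prems] emeasure_busy_below_Suc)
  finally show ?case .
qed

end

text \<open>In a growth step the newest customer needs more than \<open>e\<close> while the next batch arrives
  within \<open>e\<close>, so the stack grows.\<close>
definition growth_step :: "real \<Rightarrow> step set" where
  "growth_step e = {r. 0 < fst (snd r) \<and> fst r < e \<and> e < snd (snd r) (fst (snd r) - 1)}"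

lemma length_step_stack_growth_step:
  assumes "r \<in> growth_step e"
  shows "Suc (length xs) \<le> length (step_stack xs r)"
proof -
  obtain a n v where r: "r = (a, Suc n, v)" "a < e" "e < v n"
    using assms by (cases r) (auto simp: growth_step_def gr0_conv_Suc)
  then have "step_stack xs r = (v n - a) # (batch_stack n v @ xs)"
    by (simp add: step_stack_def batch_stack_Suc)
  then show ?thesis by simp
qed

context lcfs_model
begin

definition growth_prob :: "real \<Rightarrow> real" where
  "growth_prob e = measure Sd {s. e < s} * (1 - exp (- lam * e))"

lemma growth_prob_bounds: "0 \<le> e \<Longrightarrow> 0 \<le> growth_prob e \<and> growth_prob e \<le> 1"
proof -
  assume e: "0 \<le> e"
  interpret prob_space Sd by (rule S_prob)
  have "exp (- lam * e) \<le> 1" using lam_pos e by simp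
  then show ?thesis unfolding growth_prob_def using prob_le_1[of "{s. e < s}"]
    by (auto intro!: mult_nonneg_nonneg mult_le_one)
qed

lemma sets_growth_step[measurable]: "growth_step e \<in> sets \<Omega>\<^sub>1"
proof -
  have [measurable]: "(\<lambda>r. snd (snd r) (fst (snd r) - 1)) \<in> borel_measurable \<Omega>\<^sub>1"
    using measurable_compose_countable[where f="\<lambda>n r. snd (snd r) (n - 1)" and g="\<lambda>r. fst (snd r)"]
    by measurable
  have "Measurable.pred \<Omega>\<^sub>1 (\<lambda>r. r \<in> growth_step e)"
    unfolding growth_step_def by measurable
  then show ?thesis by (simp add: pred_def space_step)
qed

lemma emeasure_PiM_S_component_greater:
  "emeasure (PiM UNIV (\<lambda>_::nat. Sd)) {v. e < v j} = ennreal (measure Sd {s. e < s})"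
  and sets_PiM_S_component_greater[measurable]: "{v. e < v j} \<in> sets (PiM UNIV (\<lambda>_::nat. Sd))"
proof -
  interpret S: prob_space Sd by (rule S_prob)
  have "(\<lambda>v. v j) \<in> borel_measurable (PiM UNIV (\<lambda>_::nat. Sd))"
    by (subst measurable_cong_sets[OF refl S_borel[symmetric]]) simp
  then have "{v \<in> space (PiM UNIV (\<lambda>_::nat. Sd)). e < v j} \<in> sets (PiM UNIV (\<lambda>_::nat. Sd))"
    by measurable
  moreover have "{v \<in> space (PiM UNIV (\<lambda>_::nat. Sd)). e < v j} = {v. e < v j}"
    by (auto simp: space_PiM space_S)
  ultimately show "{v. e < v j} \<in> sets (PiM UNIV (\<lambda>_::nat. Sd))" by simp
  have "{v. e < v j} = (\<lambda>v. v j) -` {s. e < s} \<inter> space (PiM UNIV (\<lambda>_::nat. Sd))"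
    by (auto simp: space_PiM space_S)
  also have "emeasure (PiM UNIV (\<lambda>_::nat. Sd)) \<dots> = emeasure (distr (PiM UNIV (\<lambda>_::nat. Sd)) Sd (\<lambda>v. v j)) {s. e < s}"
    by (rule emeasure_distr[symmetric]) (simp_all add: S_borel)
  also have "distr (PiM UNIV (\<lambda>_::nat. Sd)) Sd (\<lambda>v. v j) = Sd"
    by (rule distr_PiM_component) (simp_all add: S_prob)
  finally show "emeasure (PiM UNIV (\<lambda>_::nat. Sd)) {v. e < v j} = ennreal (measure Sd {s. e < s})"
    by (simp add: S.emeasure_eq_measure)
qed

lemma emeasure_growth_step:
  assumes e: "0 \<le> e"
  shows "emeasure \<Omega>\<^sub>1 (growth_step e) = ennreal (growth_prob e)"
proof -
  have "emeasure \<Omega>\<^sub>1 (growth_step e) =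
      (\<integral>\<^sup>+n. \<integral>\<^sup>+v. \<integral>\<^sup>+a. indicator (growth_step e) (a, n, v) \<partial>exp_dist lam \<partial>PiM UNIV (\<lambda>_::nat. Sd) \<partial>measure_pmf Bd)"
    by (simp add: nn_integral_step_space flip: nn_integral_indicator)
  also have "\<dots> = (\<integral>\<^sup>+n. \<integral>\<^sup>+v. ennreal (1 - exp (- lam * e)) * indicator {v. e < v (n - 1)} v
      \<partial>PiM UNIV (\<lambda>_::nat. Sd) \<partial>measure_pmf Bd)"
  proof (rule nn_integral_cong_AE, rule AE_pmfI, rule nn_integral_cong)
    fix n v assume "n \<in> set_pmf Bd"
    then have "0 < n" using batch_pos by (cases n) auto
    then have "indicator (growth_step e) (a, n, v) = indicator {v. e < v (n - 1)} v * (indicator {..<e} a :: ennreal)"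
      for a
      by (auto simp: growth_step_def indicator_def)
    then have "(\<integral>\<^sup>+a. indicator (growth_step e) (a, n, v) \<partial>exp_dist lam) =
        indicator {v. e < v (n - 1)} v * emeasure (exp_dist lam) {..<e}"
      by (simp add: nn_integral_cmult_indicator sets_exp_dist)
    then show "(\<integral>\<^sup>+a. indicator (growth_step e) (a, n, v) \<partial>exp_dist lam) =
        ennreal (1 - exp (- lam * e)) * indicator {v. e < v (n - 1)} v"
      by (simp add: emeasure_exp_dist_lessThan[OF lam_pos e] mult.commute)
  qed
  also have "\<dots> = ennreal (growth_prob e)"
    using lam_pos e
    by (simp add: nn_integral_cmult_indicator emeasure_PiM_S_component_greater growth_prob_def
        ennreal_mult[symmetric] mult.commute
        measure_pmf.emeasure_space_1)
  finally show ?thesis .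
qed

text \<open>Once the stack is \<open>j\<close> short of \<open>m\<close>, \<open>j\<close> growth steps in a row end the event.\<close>
lemma emeasure_busy_below_growth:
  assumes e: "0 \<le> e"
  shows "m \<le> length xs + j \<Longrightarrow> emeasure \<Omega> (busy_below m (Suc j) xs) \<le> ennreal (1 - growth_prob e ^ j)"
proof (induction j arbitrary: xs)
  case 0
  then show ?case by (simp add: emeasure_busy_below_Suc)
next
  case (Suc j)
  interpret \<Omega>: prob_space \<Omega> by (rule prob_space_input)
  interpret \<Omega>\<^sub>1: prob_space \<Omega>\<^sub>1 by (rule prob_space_step)
  define p where "p = growth_prob e"
  have p: "0 \<le> p" "p \<le> 1" using growth_prob_bounds[OF e] by (auto simp: p_def)
  have "emeasure \<Omega> (busy_below m (Suc (Suc j)) xs) \<le>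
      (\<integral>\<^sup>+r. ennreal (1 - p ^ j) * indicator (growth_step e) r + 1 * indicator (space \<Omega>\<^sub>1 - growth_step e) r \<partial>\<Omega>\<^sub>1)"
    unfolding emeasure_busy_below_Suc[of m "Suc j"]
  proof (intro nn_integral_mono)
    fix r
    show "(if fst (snd r) + length xs < m \<and> step_stack xs r \<noteq> [] then emeasure \<Omega> (busy_below m (Suc j) (step_stack xs r))
        else 0) \<le> ennreal (1 - p ^ j) * indicator (growth_step e) r + 1 * indicator (space \<Omega>\<^sub>1 - growth_step e) r"
    proof (cases "r \<in> growth_step e")
      case True
      then have "m \<le> length (step_stack xs r) + j"
        using length_step_stack_growth_step[OF True, of xs] Suc.prems by simp
      with True show ?thesis by (auto simp: p_def dest: Suc.IH)
    qed (auto simp: \<Omega>.emeasure_le_1 space_step)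
  qed
  also have "\<dots> = ennreal (1 - p ^ j) * emeasure \<Omega>\<^sub>1 (growth_step e) + 1 * emeasure \<Omega>\<^sub>1 (space \<Omega>\<^sub>1 - growth_step e)"
    by (subst nn_integral_add) (auto simp: nn_integral_cmult_indicator)
  also have "\<dots> = ennreal (1 - p ^ j) * ennreal p + ennreal (1 - p)"
  proof -
    have "measure \<Omega>\<^sub>1 (growth_step e) = p"
      using emeasure_growth_step[OF e] p by (simp add: \<Omega>\<^sub>1.emeasure_eq_measure p_def)
    then show ?thesis
      using emeasure_growth_step[OF e] \<Omega>\<^sub>1.prob_compl[OF sets_growth_step, of e]
      by (simp add: p_def \<Omega>\<^sub>1.emeasure_eq_measure)
  qed
  also have "\<dots> = ennreal ((1 - p ^ j) * p + (1 - p))"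
    using p by (simp add: ennreal_mult[symmetric] ennreal_plus[symmetric] power_le_one del: ennreal_plus)
  also have "(1 - p ^ j) * p + (1 - p) = 1 - p ^ Suc j"
    by (simp add: algebra_simps)
  finally show ?case by (simp add: p_def)
qed

lemma emeasure_busy_below_add:
  assumes C: "\<And>ys. emeasure \<Omega> (busy_below m j ys) \<le> C"
  shows "emeasure \<Omega> (busy_below m (k + j) xs) \<le> emeasure \<Omega> (busy_below m k xs) * C"
proof (induction k arbitrary: xs)
  case 0
  interpret \<Omega>: prob_space \<Omega> by (rule prob_space_input)
  show ?case using C[of xs] by (simp add: \<Omega>.emeasure_space_1[unfolded space_input])
next
  case (Suc k)
  have "emeasure \<Omega> (busy_below m (Suc k + j) xs) \<le> (\<integral>\<^sup>+r. (if fst (snd r) + length xs < m \<and>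
      step_stack xs r \<noteq> [] then emeasure \<Omega> (busy_below m k (step_stack xs r)) else 0) * C \<partial>\<Omega>\<^sub>1)"
    using emeasure_busy_below_Suc[of m "k + j"] by (auto intro!: nn_integral_mono Suc.IH)
  also have "\<dots> = emeasure \<Omega> (busy_below m (Suc k) xs) * C"
    by (simp add: nn_integral_multc emeasure_busy_below_Suc)
  finally show ?case .
qed

lemma emeasure_busy_below_geometric:
  assumes e: "0 \<le> e"
  shows "emeasure \<Omega> (busy_below m (n * Suc m) xs) \<le> ennreal ((1 - growth_prob e ^ m) ^ n)"
proof (induction n arbitrary: xs)
  case 0
  interpret \<Omega>: prob_space \<Omega> by (rule prob_space_input)
  show ?case by (simp add: \<Omega>.emeasure_space_1[unfolded space_input])
next
  case (Suc n)
  have p: "0 \<le> growth_prob e" "growth_prob e \<le> 1" using growth_prob_bounds[OF e] by auto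
  have "emeasure \<Omega> (busy_below m (n * Suc m + Suc m) xs) \<le>
      emeasure \<Omega> (busy_below m (n * Suc m) xs) * ennreal (1 - growth_prob e ^ m)"
    by (rule emeasure_busy_below_add) (simp add: emeasure_busy_below_growth[OF e])
  also have "\<dots> \<le> ennreal ((1 - growth_prob e ^ m) ^ n) * ennreal (1 - growth_prob e ^ m)"
    by (intro mult_right_mono Suc.IH) simp
  finally show ?case
    using p by (simp add: ennreal_mult[symmetric] power_le_one mult.commute add.commute)
qed

lemma stay_below_prob_le_emeasure_never_reaches:
  assumes xs: "\<forall>x\<in>set xs. 0 \<le> x"
  shows "ennreal (stay_below_prob (q m) lam xs) \<le> emeasure \<Omega> (never_reaches m xs)"
proof -
  interpret \<Omega>: prob_space \<Omega> by (rule prob_space_input)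
  have "emeasure \<Omega> (never_reaches m xs) = (INF k. emeasure \<Omega> (stays_below m k xs))"
    unfolding never_reaches_eq_INT
    by (rule INF_emeasure_decseq[symmetric]) (auto simp: decseq_def stays_below_antimono)
  then show ?thesis
    using stay_below_prob_le_emeasure_stays_below[OF xs] by (simp add: le_INF_iff)
qed

lemma emeasure_never_reaches_le_stay_below_prob:
  assumes xs: "\<forall>x\<in>set xs. 0 \<le> x" and e: "0 < e" "0 < growth_prob e"
  shows "emeasure \<Omega> (never_reaches m xs) \<le> ennreal (stay_below_prob (q m) lam xs)"
proof -
  define p where "p = growth_prob e"
  define G where "G = stay_below_prob (q m) lam xs"
  have p: "0 < p" "p \<le> 1" using growth_prob_bounds[of e] e by (auto simp: p_def)
  have "emeasure \<Omega> (never_reaches m xs) \<le> ennreal (G + (1 - p ^ m) ^ n)" for n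
  proof -
    have "emeasure \<Omega> (never_reaches m xs) \<le> emeasure \<Omega> (stays_below m (n * Suc m) xs)"
      by (rule emeasure_mono) (auto simp: never_reaches_eq_INT)
    also have "\<dots> \<le> ennreal G + emeasure \<Omega> (busy_below m (n * Suc m) xs)"
      unfolding G_def by (rule emeasure_stays_below_le[OF xs])
    also have "\<dots> \<le> ennreal G + ennreal ((1 - p ^ m) ^ n)"
      unfolding p_def by (intro add_left_mono emeasure_busy_below_geometric) (use e in simp)
    finally show ?thesis
      using p stay_below_prob_nonneg[of "q m"] q_bounds by (simp add: G_def ennreal_plus power_le_one)
  qed
  moreover have "(\<lambda>n. ennreal (G + (1 - p ^ m) ^ n)) \<longlonglongrightarrow> ennreal (G + 0)"
    using p by (intro tendsto_ennrealI tendsto_add tendsto_const LIMSEQ_power_zero) (simp add: power_le_one)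
  ultimately show ?thesis
    unfolding G_def by (intro LIMSEQ_le_const) auto
qed

end

section \<open>The distribution of the maximum\<close>

lemma max_bp_less_iff_never_reaches: "max_bp A N V < enat m \<longleftrightarrow> (A, N, V) \<in> never_reaches m []"
proof (cases m)
  case 0
  have "(A, N, V) \<notin> never_reaches 0 []"
    unfolding never_reaches_def mem_Collect_eq by (intro notI) (drule spec[of _ 0], simp)
  with 0 show ?thesis by (simp add: zero_enat_def[symmetric])
next
  case (Suc k)
  have "x < enat (Suc k) \<longleftrightarrow> x \<le> enat k" for x :: enat
    by (cases x) auto
  with Suc show ?thesis
    unfolding max_bp_def never_reaches_def in_bp_def
    by (auto simp: SUP_le_iff stack_eq_stack_from less_Suc_eq_le)
qed

context lcfs_model
begin

lemma measurable_max_bp: "(\<lambda>(A, N, V). max_bp A N V) \<in> \<Omega> \<rightarrow>\<^sub>M count_space UNIV"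
proof -
  have "(\<lambda>(A, N, V). max_bp A N V) -` {a} \<inter> space \<Omega> \<in> sets \<Omega>" for a
  proof (cases a)
    case (enat k)
    have "max_bp A N V = enat k \<longleftrightarrow> max_bp A N V < enat (Suc k) \<and> \<not> max_bp A N V < enat k" for A N V
      by (cases "max_bp A N V") auto
    then have "(\<lambda>(A, N, V). max_bp A N V) -` {a} \<inter> space \<Omega> = never_reaches (Suc k) [] - never_reaches k []"
      unfolding enat by (force simp: space_input max_bp_less_iff_never_reaches)
    then show ?thesis by simp
  next
    case infinity
    have "max_bp A N V = \<infinity> \<longleftrightarrow> (\<forall>k. \<not> max_bp A N V < enat k)" for A N V
      by (cases "max_bp A N V") auto
    then have "(\<lambda>(A, N, V). max_bp A N V) -` {a} \<inter> space \<Omega> = space \<Omega> - (\<Union>k. never_reaches k [])"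
      unfolding infinity by (force simp: space_input max_bp_less_iff_never_reaches)
    then show ?thesis by auto
  qed
  then show ?thesis by (subst measurable_count_space_eq_countable) auto
qed

lemma measure_M_dist_greater:
  "measure (M_dist lam Bd Sd) {x \<in> space (M_dist lam Bd Sd). t < x} =
    (case t of enat k \<Rightarrow> 1 - measure \<Omega> (never_reaches (Suc k) []) | \<infinity> \<Rightarrow> 0)"
proof -
  interpret \<Omega>: prob_space \<Omega> by (rule prob_space_input)
  have "measure (M_dist lam Bd Sd) {x \<in> space (M_dist lam Bd Sd). t < x} =
      measure \<Omega> ((\<lambda>(A, N, V). max_bp A N V) -` {x. t < x} \<inter> space \<Omega>)"
    unfolding M_dist_def by (subst measure_distr[OF measurable_max_bp]) auto
  also have "\<dots> = (case t of enat k \<Rightarrow> 1 - measure \<Omega> (never_reaches (Suc k) []) | \<infinity> \<Rightarrow> 0)"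
  proof (cases t)
    case (enat k)
    have "enat k < max_bp A N V \<longleftrightarrow> \<not> max_bp A N V < enat (Suc k)" for A N V
      by (cases "max_bp A N V") auto
    then have "(\<lambda>(A, N, V). max_bp A N V) -` {x. t < x} \<inter> space \<Omega> = space \<Omega> - never_reaches (Suc k) []"
      unfolding enat by (force simp: space_input max_bp_less_iff_never_reaches)
    with enat show ?thesis
      by (simp add: \<Omega>.prob_compl)
  qed simp
  finally show ?thesis .
qed

end

section \<open>Comparison\<close>

lemma eq_return_0_if_AE_eq_0:
  assumes "prob_space M" "sets M = sets borel" "AE x in M. x = (0::real)"
  shows "M = return borel 0"
proof (rule measure_eqI)
  interpret prob_space M by fact
  fix A assume "A \<in> sets M"
  then have "emeasure M A = emeasure M (if 0 \<in> A then space M else {})"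
    using assms(3) by (intro emeasure_eq_AE) auto
  then show "emeasure M A = emeasure (return borel 0) A"
    using \<open>A \<in> sets M\<close> assms(2) by (simp add: emeasure_space_1)
qed (use assms in simp)

lemma AE_eq_0_if_tails_null:
  fixes M :: "real measure"
  assumes "prob_space M" "sets M = sets borel" "AE s in M. 0 \<le> s"
    and null: "\<And>e. 0 < e \<Longrightarrow> measure M {s. e < s} = 0"
  shows "AE s in M. s = 0"
proof -
  interpret prob_space M by fact
  have "AE s in M. s \<notin> {s. inverse (real (Suc n)) < s}" for n
    by (rule AE_not_in) (use null[of "inverse (real (Suc n))"] assms(2) in \<open>auto simp: emeasure_eq_measure\<close>)
  then have "AE s in M. \<forall>n. \<not> inverse (real (Suc n)) < s"
    by (simp add: AE_all_countable)
  with assms(3) show ?thesis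
  proof eventually_elim
    case (elim s)
    then show "s = 0"
      using reals_Archimedean[of s] by (cases "0 < s") auto
  qed
qed

text \<open>The transform \<open>E e\<^sup>-\<^sup>S\<close> of a nonnegative \<open>S\<close> is at most \<open>1\<close>, with equality only if \<open>S = 0\<close>.\<close>
lemma AE_eq_0_if_lt_ge:
  assumes M: "prob_space M" "sets M = sets borel" "AE s in M. s = 0"
    and M': "prob_space M'" "sets M' = sets borel" "AE s in M'. 0 \<le> s"
    and lt: "lt_ge M M'"
  shows "AE s in M'. s = 0"
proof -
  interpret M: prob_space M by (rule M(1))
  interpret M': prob_space M' by (rule M'(1))
  have M_nonneg: "AE s in M. 0 \<le> s" using M(3) by eventually_elim simp
  have int': "integrable M' (\<lambda>s. 1 - exp (- s))"
    using integrable_laplace_transform[OF M', of 1] by simp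
  have "1 = laplace_transform M 1"
  proof -
    have "(\<integral>s. exp (- 1 * s) \<partial>M) = (\<integral>s. 1 \<partial>M)"
      by (rule integral_cong_AE) (use M(2,3) in auto)
    then show ?thesis by (simp add: laplace_transform_def M.prob_space)
  qed
  also have "\<dots> \<le> laplace_transform M' 1"
    by (rule laplace_transform_mono_lt_ge[OF M(1,2) M_nonneg M' lt]) simp
  finally have "(\<integral>s. 1 - exp (- s) \<partial>M') \<le> 0"
    using integrable_laplace_transform[OF M', of 1] by (simp add: laplace_transform_def M'.prob_space)
  moreover have nonneg: "AE s in M'. 0 \<le> 1 - exp (- s)"
    using M'(3) by eventually_elim simp
  ultimately have "AE s in M'. 1 - exp (- s) = 0"
    using integral_nonneg_eq_0_iff_AE[OF int' nonneg] integral_nonneg_AE[OF nonneg] by simp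
  then show ?thesis by eventually_elim simp
qed

lemma cx_ge_imp_lt_ge: "cx_ge Sd' Sd \<Longrightarrow> lt_ge Sd Sd'"
  unfolding lt_ge_def
proof (intro allI impI)
  fix \<theta> :: real assume cx: "cx_ge Sd' Sd" and \<theta>: "0 < \<theta>"
    and int: "integrable Sd (\<lambda>x. exp (- \<theta> * x))" "integrable Sd' (\<lambda>y. exp (- \<theta> * y))"
  have "convex_on UNIV (\<lambda>x. exp (- \<theta> * x))"
  proof (rule convex_on_realI[where f'="\<lambda>x. - \<theta> * exp (- \<theta> * x)"])
    show "((\<lambda>x. exp (- \<theta> * x)) has_real_derivative - \<theta> * exp (- \<theta> * x)) (at x)" for x
      by (auto intro!: derivative_eq_intros)
    show "- \<theta> * exp (- \<theta> * x) \<le> - \<theta> * exp (- \<theta> * y)" if "x \<le> y" for x y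
      using that \<theta> by simp
  qed simp
  with cx int show "(\<integral>x. exp (- \<theta> * x) \<partial>Sd) \<le> (\<integral>y. exp (- \<theta> * y) \<partial>Sd')"
    unfolding cx_ge_def by blast
qed

lemma overflow_prob_antimono_lt_ge:
  assumes S: "lcfs_model lam Bd Sd" and S': "lcfs_model lam Bd Sd'" and lt: "lt_ge Sd Sd'"
  shows "lcfs_model.q lam Bd Sd' m d \<le> lcfs_model.q lam Bd Sd m d"
proof -
  interpret S: lcfs_model lam Bd Sd by (rule S)
  interpret S': lcfs_model lam Bd Sd' by (rule S')
  show ?thesis
    unfolding overflow_prob_def
  proof (rule overflow_iter_antimono)
    fix x y :: real assume x: "0 \<le> x"
    show "0 \<le> S.\<phi> x \<and> S.\<phi> x \<le> S'.\<phi> x"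
    proof
      show "0 \<le> S.\<phi> x" using S.\<phi>_bounds x by simp
      show "S.\<phi> x \<le> S'.\<phi> x"
        by (rule laplace_transform_mono_lt_ge[OF S.S_prob S.S_borel S.S_nonneg S'.S_prob S'.S_borel
              S'.S_nonneg lt]) (use x S.lam_pos in simp)
    qed
    show "S'.\<phi> x \<le> 1" using S'.\<phi>_bounds x by simp
    show "S'.\<phi> y \<le> S'.\<phi> x" if "x \<le> y"
      by (rule laplace_transform_antimono[OF S'.S_prob S'.S_borel S'.S_nonneg])
        (use x that S.lam_pos in \<open>simp_all add: mult_left_mono\<close>)
  qed
qed

lemma measure_never_reaches_mono_lt_ge:
  assumes S: "lcfs_model lam Bd Sd" and S': "lcfs_model lam Bd Sd'" and lt: "lt_ge Sd Sd'"
  shows "measure (input_space lam Bd Sd) (never_reaches m []) \<le> measure (input_space lam Bd Sd') (never_reaches m [])"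
proof -
  interpret S: lcfs_model lam Bd Sd by (rule S)
  interpret S': lcfs_model lam Bd Sd' by (rule S')
  interpret \<Omega>: prob_space "input_space lam Bd Sd" by (rule S.prob_space_input)
  interpret \<Omega>': prob_space "input_space lam Bd Sd'" by (rule S'.prob_space_input)
  show ?thesis
  proof (cases "\<forall>e>0. measure Sd {s. e < s} = 0")
    case True
    have "AE s in Sd. s = 0"
      using True by (intro AE_eq_0_if_tails_null[OF S.S_prob S.S_borel S.S_nonneg]) auto
    moreover from this have "AE s in Sd'. s = 0"
      by (rule AE_eq_0_if_lt_ge[OF S.S_prob S.S_borel _ S'.S_prob S'.S_borel S'.S_nonneg lt])
    ultimately have "Sd = Sd'"
      using eq_return_0_if_AE_eq_0[OF S.S_prob S.S_borel] eq_return_0_if_AE_eq_0[OF S'.S_prob S'.S_borel]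
      by simp
    then show ?thesis by simp
  next
    case False
    then obtain e where e: "0 < e" "measure Sd {s. e < s} \<noteq> 0" by auto
    then have "0 < measure Sd {s. e < s}"
      using measure_nonneg[of Sd "{s. e < s}"] by linarith
    then have "0 < S.growth_prob e"
      unfolding S.growth_prob_def using S.lam_pos e by (intro mult_pos_pos) simp_all
    then have "measure (input_space lam Bd Sd) (never_reaches m []) \<le> 1 - S.q m 0"
      using S.emeasure_never_reaches_le_stay_below_prob[of "[]" e m] e S.q_bounds
      by (simp add: \<Omega>.emeasure_eq_measure stay_below_prob_def)
    also have "\<dots> \<le> 1 - S'.q m 0"
      using overflow_prob_antimono_lt_ge[OF S S' lt] by simp
    also have "\<dots> \<le> measure (input_space lam Bd Sd') (never_reaches m [])"
      using S'.stay_below_prob_le_emeasure_never_reaches[of "[]" m]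
      by (simp add: \<Omega>'.emeasure_eq_measure stay_below_prob_def)
    finally show ?thesis .
  qed
qed

theorem theorem2:
  fixes lam :: real and Bd :: "nat pmf" and Sd Sd' :: "real measure"
  assumes lam_pos: "lam > 0"
    and batch_pos: "0 \<notin> set_pmf Bd"
    and batch_mean: "integrable (measure_pmf Bd) real"
    and S_prob: "prob_space Sd" and S_borel: "sets Sd = sets borel"
    and S_nonneg: "AE x in Sd. 0 \<le> x" and S_int: "integrable Sd (\<lambda>x. x)"
    and S_stable: "lam * measure_pmf.expectation Bd real * (\<integral>x. x \<partial>Sd) < 1"
    and S'_prob: "prob_space Sd'" and S'_borel: "sets Sd' = sets borel"
    and S'_nonneg: "AE x in Sd'. 0 \<le> x" and S'_int: "integrable Sd' (\<lambda>x. x)"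
    and S'_stable: "lam * measure_pmf.expectation Bd real * (\<integral>x. x \<partial>Sd') < 1"
  shows "(lt_ge Sd Sd' \<longrightarrow> st_ge (M_dist lam Bd Sd) (M_dist lam Bd Sd'))
       \<and> (cx_ge Sd' Sd \<longrightarrow> st_ge (M_dist lam Bd Sd) (M_dist lam Bd Sd'))"
proof -
  have S: "lcfs_model lam Bd Sd" and S': "lcfs_model lam Bd Sd'"
    using assms by (simp_all add: lcfs_model_def)
  have "st_ge (M_dist lam Bd Sd) (M_dist lam Bd Sd')" if lt: "lt_ge Sd Sd'"
    unfolding st_ge_def
  proof
    fix t :: enat
    show "measure (M_dist lam Bd Sd') {x \<in> space (M_dist lam Bd Sd'). t < x}
        \<le> measure (M_dist lam Bd Sd) {x \<in> space (M_dist lam Bd Sd). t < x}"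
      using measure_never_reaches_mono_lt_ge[OF S S' lt]
      by (cases t) (simp_all add: lcfs_model.measure_M_dist_greater[OF S] lcfs_model.measure_M_dist_greater[OF S'])
  qed
  then show ?thesis
    using cx_ge_imp_lt_ge by blast
qed

end
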